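(* Let $\check\eta\in\overline{\mathscr{A}}^{\bullet}_{-,n}$, let $J\subsetneq I_{\mathrm{aff}}$ be such that the parabolic subgroup $(\widetilde W_{\mathrm{aff}})_J$ generated by $\{s_j\}_{j\in J}$ equals the stabilizer of $\check\eta$ under the dot action of $\widetilde W_{\mathrm{aff}}$, let $\sigma\in W\cap{}^J\widetilde W_{\mathrm{aff}}$, and set $\check\mu=\check\eta\bullet\sigma$. Then for every $i\in I$: (1) if $\sigma s_i\in{}^J\widetilde W_{\mathrm{aff}}$ and $\sigma s_i>\sigma$, then $-n(\check a_i)<\langle\check\mu+\check\rho,a_i\rangle<0$; (2) if $\sigma s_i\in{}^J\widetilde W_{\mathrm{aff}}$ and $\sigma s_i<\sigma$, then $0<\langle\check\mu+\check\rho,a_i\rangle<n(\check a_i)$; (3) $\sigma s_i\notin{}^J\widetilde W_{\mathrm{aff}}$ if and only if $\langle\check\mu+\check\rho,a_i\rangle=0$.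
   Context: Let $(Y,\{\check a_i\}_{i\in I},X,\{a_i\}_{i\in I})$ be a root datum with finite-type Cartan matrix ($\langle\check a_i,a_j\rangle=a_{ij}$), roots $\mathscr{R}$, positive roots $\mathscr{R}_+$, $\check\rho$ half the sum of positive coroots, Weyl group $W$ acting on the right on $V=Y\otimes\mathbb{R}$. Fix $n\ge1$ and a $W$-invariant quadratic form $\mathsf{Q}$ on $Y$, with $\mathsf{B}(y,z)=\mathsf{Q}(y+z)-\mathsf{Q}(y)-\mathsf{Q}(z)$; $n(\check a)$ is the smallest positive integer with $n(\check a)\mathsf{Q}(\check a)\equiv0\bmod n$. The twisted root datum has $\tilde Y=\{y\in Y:\mathsf{B}(y,z)\in n\mathbb{Z}\ \forall z\in Y\}$, simple coroots $\tilde a^\vee_i=n(\check a_i)\check a_i$ and simple roots $\tilde a_i=n(\check a_i)^{-1}a_i$ (with twisted roots $\tilde a=n(\check a)^{-1}a$, coroots $\tilde a^\vee=n(\check a)\check a$); standing assumption: it is simply connected ($\tilde Y$ has basis $\{\tilde a_i^\vee\}$). The affine Weyl group $\widetilde W_{\mathrm{aff}}\cong W\ltimes\tilde Y$ is generated by affine reflections $\sigma_{\tilde a,k}$ ($\tilde a$ a twisted root, $k\in\mathbb{Z}$); it is a Coxeter group with simple reflections $s_i=\sigma_{\tilde a_i,0}$ ($i\in I$) and $s_0=\sigma_{\tilde\theta,1}$, $\tilde\theta$ the highest root of the twisted root system, $I_{\mathrm{aff}}=I\sqcup\{0\}$; length, Bruhat order $<$ and parabolic subgroups refer to this Coxeter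 structure, and $W=\langle s_i:i\in I\rangle$. It acts on the right on $V$ by the dot action $x\bullet\sigma_{\tilde a,k}=x-(\langle x+\check\rho,\tilde a\rangle-k)\tilde a^\vee$. For $J\subset I_{\mathrm{aff}}$, ${}^J\widetilde W_{\mathrm{aff}}=\{w:\ell(s_jw)>\ell(w)\ \forall j\in J\}$. Finally $\overline{\mathscr{A}}^{\bullet}_{-,n}=\{v\in V:-n(\check a)<\langle v+\check\rho,a\rangle\le0\ \forall a\in\mathscr{R}_+\}$. *)

theory Defs
  imports "HOL-Analysis.Analysis"
begin

text \<open>Model of the root datum: Y = X = int^'n (a free Z-module of finite rank with
 the standard perfect pairing), V = Y (x) R = real^'n.  The index set I is a finite
 type 'i; the coroots are cor i in Y, the roots are rt i in X.\<close>

definition ipair :: "int^'n \<Rightarrow> int^'n \<Rightarrow> int" where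
  "ipair y x = (\<Sum>k\<in>UNIV. y $ k * x $ k)"

definition rv :: "int^'n \<Rightarrow> real^'n" where
  "rv y = (\<chi> k. real_of_int (y $ k))"

definition finite_type_cartan :: "('i::finite \<Rightarrow> 'i \<Rightarrow> int) \<Rightarrow> bool" where
  "finite_type_cartan A \<longleftrightarrow>
     (\<forall>i. A i i = 2) \<and> (\<forall>i j. i \<noteq> j \<longrightarrow> A i j \<le> 0) \<and>
     (\<forall>i j. A i j = 0 \<longleftrightarrow> A j i = 0) \<and>
     (\<exists>d :: 'i \<Rightarrow> real. (\<forall>i. d i > 0) \<and> (\<forall>i j. d i * A i j = d j * A j i) \<and>
        (\<forall>x :: 'i \<Rightarrow> real. x \<noteq> (\<lambda>_. 0) \<longrightarrow>
            (\<Sum>i\<in>UNIV. \<Sum>j\<in>UNIV. x i * d i * of_int (A i j) * x j) > 0))"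

definition reflX :: "('i \<Rightarrow> int^'n) \<Rightarrow> ('i \<Rightarrow> int^'n) \<Rightarrow> 'i \<Rightarrow> int^'n \<Rightarrow> int^'n" where
  "reflX cor rt i a = a - ipair (cor i) a *s rt i"

definition reflY :: "('i \<Rightarrow> int^'n) \<Rightarrow> ('i \<Rightarrow> int^'n) \<Rightarrow> 'i \<Rightarrow> int^'n \<Rightarrow> int^'n" where
  "reflY cor rt i y = y - ipair y (rt i) *s cor i"

inductive_set rootpairs :: "('i \<Rightarrow> int^'n) \<Rightarrow> ('i \<Rightarrow> int^'n) \<Rightarrow> ((int^'n) \<times> (int^'n)) set"
  for cor rt where
  simple: "(rt i, cor i) \<in> rootpairs cor rt"
| refl: "(a, c) \<in> rootpairs cor rt \<Longrightarrow> (reflX cor rt i a, reflY cor rt i c) \<in> rootpairs cor rt"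

definition roots :: "('i \<Rightarrow> int^'n) \<Rightarrow> ('i \<Rightarrow> int^'n) \<Rightarrow> (int^'n) set" where
  "roots cor rt = fst ` rootpairs cor rt"

definition coroot :: "('i \<Rightarrow> int^'n) \<Rightarrow> ('i \<Rightarrow> int^'n) \<Rightarrow> int^'n \<Rightarrow> int^'n" where
  "coroot cor rt a = (THE c. (a, c) \<in> rootpairs cor rt)"

definition pos_roots :: "('i::finite \<Rightarrow> int^'n) \<Rightarrow> ('i \<Rightarrow> int^'n) \<Rightarrow> (int^'n) set" where
  "pos_roots cor rt = {a \<in> roots cor rt. \<exists>m :: 'i \<Rightarrow> nat. a = (\<Sum>i\<in>UNIV. int (m i) *s rt i)}"

definition rhoc :: "('i::finite \<Rightarrow> int^'n) \<Rightarrow> ('i \<Rightarrow> int^'n) \<Rightarrow> real^'n" where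
  "rhoc cor rt = (1/2) *\<^sub>R (\<Sum>a\<in>pos_roots cor rt. rv (coroot cor rt a))"

definition Bf :: "(int^'n \<Rightarrow> int) \<Rightarrow> int^'n \<Rightarrow> int^'n \<Rightarrow> int" where
  "Bf Q y z = Q (y + z) - Q y - Q z"

definition quadratic_form :: "(int^'n \<Rightarrow> int) \<Rightarrow> bool" where
  "quadratic_form Q \<longleftrightarrow> (\<forall>k y. Q (k *s y) = k^2 * Q y) \<and>
     (\<forall>y y' z. Bf Q (y + y') z = Bf Q y z + Bf Q y' z) \<and>
     (\<forall>y z z'. Bf Q y (z + z') = Bf Q y z + Bf Q y z')"

definition W_invariant :: "('i \<Rightarrow> int^'n) \<Rightarrow> ('i \<Rightarrow> int^'n) \<Rightarrow> (int^'n \<Rightarrow> int) \<Rightarrow> bool" where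
  "W_invariant cor rt Q \<longleftrightarrow> (\<forall>i y. Q (reflY cor rt i y) = Q y)"

definition nQ :: "(int^'n \<Rightarrow> int) \<Rightarrow> nat \<Rightarrow> int^'n \<Rightarrow> nat" where
  "nQ Q n c = (LEAST m :: nat. 0 < m \<and> int n dvd int m * Q c)"

definition Ytil :: "(int^'n \<Rightarrow> int) \<Rightarrow> nat \<Rightarrow> (int^'n) set" where
  "Ytil Q n = {y. \<forall>z. int n dvd Bf Q y z}"

definition tw_scor :: "('i \<Rightarrow> int^'n) \<Rightarrow> (int^'n \<Rightarrow> int) \<Rightarrow> nat \<Rightarrow> 'i \<Rightarrow> int^'n" where
  "tw_scor cor Q n i = int (nQ Q n (cor i)) *s cor i"

definition simply_connected :: "('i::finite \<Rightarrow> int^'n) \<Rightarrow> (int^'n \<Rightarrow> int) \<Rightarrow> nat \<Rightarrow> bool" where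
  "simply_connected cor Q n \<longleftrightarrow>
     Ytil Q n = {(\<Sum>i\<in>UNIV. k i *s tw_scor cor Q n i) | k. True} \<and>
     (\<forall>k. (\<Sum>i\<in>UNIV. k i *s tw_scor cor Q n i) = 0 \<longrightarrow> (\<forall>i. k i = 0))"

definition tw_root :: "('i \<Rightarrow> int^'n) \<Rightarrow> ('i \<Rightarrow> int^'n) \<Rightarrow> (int^'n \<Rightarrow> int) \<Rightarrow> nat \<Rightarrow> int^'n \<Rightarrow> real^'n" where
  "tw_root cor rt Q n a = (1 / real (nQ Q n (coroot cor rt a))) *\<^sub>R rv a"

definition tw_coroot :: "('i \<Rightarrow> int^'n) \<Rightarrow> ('i \<Rightarrow> int^'n) \<Rightarrow> (int^'n \<Rightarrow> int) \<Rightarrow> nat \<Rightarrow> int^'n \<Rightarrow> real^'n" where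
  "tw_coroot cor rt Q n a = real (nQ Q n (coroot cor rt a)) *\<^sub>R rv (coroot cor rt a)"

definition tw_sroot :: "('i \<Rightarrow> int^'n) \<Rightarrow> ('i \<Rightarrow> int^'n) \<Rightarrow> (int^'n \<Rightarrow> int) \<Rightarrow> nat \<Rightarrow> 'i \<Rightarrow> real^'n" where
  "tw_sroot cor rt Q n i = (1 / real (nQ Q n (cor i))) *\<^sub>R rv (rt i)"

definition tw_scoroot :: "('i \<Rightarrow> int^'n) \<Rightarrow> (int^'n \<Rightarrow> int) \<Rightarrow> nat \<Rightarrow> 'i \<Rightarrow> real^'n" where
  "tw_scoroot cor Q n i = rv (tw_scor cor Q n i)"

definition tw_highest :: "('i::finite \<Rightarrow> int^'n) \<Rightarrow> ('i \<Rightarrow> int^'n) \<Rightarrow> (int^'n \<Rightarrow> int) \<Rightarrow> nat \<Rightarrow> int^'n \<Rightarrow> bool" where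
  "tw_highest cor rt Q n theta \<longleftrightarrow> theta \<in> roots cor rt \<and>
     (\<forall>a\<in>roots cor rt. \<exists>m :: 'i \<Rightarrow> nat.
        tw_root cor rt Q n theta - tw_root cor rt Q n a = (\<Sum>i\<in>UNIV. real (m i) *\<^sub>R tw_sroot cor rt Q n i))"

definition aff_refl :: "real^'n \<Rightarrow> real^'n \<Rightarrow> real^'n \<Rightarrow> int \<Rightarrow> real^'n \<Rightarrow> real^'n" where
  "aff_refl rho al alv k x = x - ((x + rho) \<bullet> al - of_int k) *\<^sub>R alv"

text \<open>Simple reflections of the affine Weyl group, indexed by I_aff = 'i option
 (None is the affine node 0), as maps V -> V via the dot action.\<close>
definition gen :: "('i::finite \<Rightarrow> int^'n) \<Rightarrow> ('i \<Rightarrow> int^'n) \<Rightarrow> (int^'n \<Rightarrow> int) \<Rightarrow> nat \<Rightarrow> int^'n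
     \<Rightarrow> 'i option \<Rightarrow> real^'n \<Rightarrow> real^'n" where
  "gen cor rt Q n theta j = (case j of
       None \<Rightarrow> aff_refl (rhoc cor rt) (tw_root cor rt Q n theta) (tw_coroot cor rt Q n theta) 1
     | Some i \<Rightarrow> aff_refl (rhoc cor rt) (tw_sroot cor rt Q n i) (tw_scoroot cor Q n i) 0)"

text \<open>Elements of the group are represented by their (right) dot action on V:
 x . (s_j1 ... s_jk) = (...(x . s_j1) ...) . s_jk.  Hence the product u w is w o u.\<close>
definition word_map :: "('i::finite \<Rightarrow> int^'n) \<Rightarrow> ('i \<Rightarrow> int^'n) \<Rightarrow> (int^'n \<Rightarrow> int) \<Rightarrow> nat \<Rightarrow> int^'n
     \<Rightarrow> 'i option list \<Rightarrow> real^'n \<Rightarrow> real^'n" where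
  "word_map cor rt Q n theta ws = fold (gen cor rt Q n theta) ws"

definition gmult :: "('a \<Rightarrow> 'a) \<Rightarrow> ('a \<Rightarrow> 'a) \<Rightarrow> 'a \<Rightarrow> 'a" where
  "gmult u w = w \<circ> u"

definition Waff where
  "Waff cor rt Q n theta = range (word_map cor rt Q n theta)"

definition Wfin where
  "Wfin cor rt Q n theta = {word_map cor rt Q n theta ws | ws. set ws \<subseteq> range Some}"

definition parabolic where
  "parabolic cor rt Q n theta J = {word_map cor rt Q n theta ws | ws. set ws \<subseteq> J}"

definition stabilizer where
  "stabilizer cor rt Q n theta x = {w \<in> Waff cor rt Q n theta. w x = x}"

definition len where
  "len cor rt Q n theta w = (LEAST l. \<exists>ws. length ws = l \<and> word_map cor rt Q n theta ws = w)"

definition min_reps where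
  "min_reps cor rt Q n theta J = {w \<in> Waff cor rt Q n theta.
      \<forall>j\<in>J. len cor rt Q n theta (gmult (gen cor rt Q n theta j) w) > len cor rt Q n theta w}"

definition reflections where
  "reflections cor rt Q n theta = {word_map cor rt Q n theta (ws @ [j] @ rev ws) | ws j. True}"

definition bruhat_less where
  "bruhat_less cor rt Q n theta u w \<longleftrightarrow>
     (u, w) \<in> {(x, gmult x t) | x t. x \<in> Waff cor rt Q n theta \<and> t \<in> reflections cor rt Q n theta \<and>
                 len cor rt Q n theta x < len cor rt Q n theta (gmult x t)}\<^sup>+"

definition alcove_minus where
  "alcove_minus cor rt Q n = {v :: real^'n. \<forall>a\<in>pos_roots cor rt.
      - real (nQ Q n (coroot cor rt a)) < (v + rhoc cor rt) \<bullet> rv a \<and> (v + rhoc cor rt) \<bullet> rv a \<le> 0}"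

end

theory Submission
  imports Defs
begin

text \<open>Every affine root, viewed as an affine function \<open>x \<mapsto> \<langle>x + \<rho>, a\<rangle> - k n(a\<^sup>\<or>)\<close>, is a
  nonnegative or a nonpositive combination of the simple affine roots \<open>\<alpha>\<^sub>0, \<dots>, \<alpha>\<^sub>r\<close>: for finite
  roots this is the classical sign coherence of roots (proved by Deodhar's reduction to rank two),
  and the level is absorbed using that \<open>\<theta>\<close> is the highest root.  This dichotomy yields the deletion
  condition, hence \<open>\<ell>(w s\<^sub>j) > \<ell>(w)\<close> exactly when \<open>\<alpha>\<^sub>j \<circ> w\<close> is positive.

  For \<open>\<sigma> \<in> W\<close> the number \<open>\<langle>\<mu> + \<rho>, a\<^sub>i\<rangle>\<close> is the value at \<open>\<eta>\<close> of \<open>\<alpha>\<^sub>i \<circ> \<sigma>\<close>, a finite root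
  of level \<open>0\<close>.  If \<open>\<sigma> s\<^sub>i > \<sigma>\<close> it is a positive root and \<open>\<eta>\<close> lying in the closed alcove gives
  \<open>-n(a\<^sub>i) < \<langle>\<mu> + \<rho>, a\<^sub>i\<rangle> \<le> 0\<close>; symmetrically if \<open>\<sigma> s\<^sub>i < \<sigma>\<close>.  Finally \<open>\<sigma> s\<^sub>i\<close> leaves \<open>\<^sup>JW\<close>
  iff the reflection \<open>\<sigma> s\<^sub>i \<sigma>\<^sup>-\<^sup>1\<close> fixes \<open>\<eta>\<close>, i.e. iff \<open>\<langle>\<mu> + \<rho>, a\<^sub>i\<rangle> = 0\<close>: a positive root that \<open>s\<^sub>i\<close>
  makes negative is a multiple of \<open>\<alpha>\<^sub>i\<close>, and conversely a reduced word for that reflection in the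
  stabiliser \<open>W\<^sub>J\<close> of \<open>\<eta>\<close> ends in a letter \<open>s\<^sub>j\<close> with \<open>\<ell>(s\<^sub>j \<sigma> s\<^sub>i) < \<ell>(\<sigma> s\<^sub>i)\<close>.\<close>

section \<open>Positivity of roots for a finite-type Cartan matrix\<close>

text \<open>Elements of the root lattice are coordinate vectors \<open>l\<close>, standing for \<open>\<Sum>k. l k \<alpha>\<^sub>k\<close>.\<close>

locale cartan_matrix =
  fixes A :: "'i::finite \<Rightarrow> 'i \<Rightarrow> int"
  assumes diag: "A i i = 2"
    and offdiag_nonpos: "i \<noteq> j \<Longrightarrow> A i j \<le> 0"
    and zero_sym: "A i j = 0 \<longleftrightarrow> A j i = 0"
    and rank2_finite: "i \<noteq> j \<Longrightarrow> A i j * A j i < 4"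
begin

definition srefl :: "'i \<Rightarrow> ('i \<Rightarrow> int) \<Rightarrow> ('i \<Rightarrow> int)" where
  "srefl i l = l(i := l i - (\<Sum>k\<in>UNIV. A i k * l k))"

fun wact :: "'i list \<Rightarrow> ('i \<Rightarrow> int) \<Rightarrow> ('i \<Rightarrow> int)" where
  "wact [] = id" | "wact (i # ws) = srefl i \<circ> wact ws"

definition delta :: "'i \<Rightarrow> 'i \<Rightarrow> int" where "delta s = (\<lambda>k. if k = s then 1 else 0)"

lemma sum_mult_upd:
  "(\<Sum>k\<in>UNIV. (f k :: int) * ((l :: 'i \<Rightarrow> int)(i := v)) k) = (\<Sum>k\<in>UNIV. f k * l k) + f i * (v - l i)"
proof -
  have "(\<Sum>k\<in>UNIV. f k * (l(i := v)) k) = (\<Sum>k\<in>UNIV. f k * l k + (if k = i then f i * (v - l i) else 0))"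
    by (rule sum.cong) (auto simp: algebra_simps)
  then show ?thesis by (simp add: sum.distrib)
qed

lemma sum_mult_delta: "(\<Sum>k\<in>UNIV. (f k :: int) * delta s k) = f s"
  by (simp add: delta_def if_distrib cong: if_cong)

lemma sum_mult_srefl:
  "(\<Sum>k\<in>UNIV. f k * srefl i l k) = (\<Sum>k\<in>UNIV. f k * l k) - f i * (\<Sum>k\<in>UNIV. A i k * l k)"
  unfolding srefl_def by (simp only: sum_mult_upd) (simp add: algebra_simps)

lemma srefl_srefl [simp]: "srefl i (srefl i l) = l"
proof -
  have "(\<Sum>k\<in>UNIV. A i k * srefl i l k) = - (\<Sum>k\<in>UNIV. A i k * l k)"
    by (simp add: sum_mult_srefl diag)
  then show ?thesis by (intro ext) (simp add: srefl_def)
qed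

lemma srefl_comp_srefl [simp]: "srefl i \<circ> srefl i = id"
  by (rule ext) simp

lemma srefl_delta_self: "srefl s (delta s) = (\<lambda>k. - delta s k)"
  using sum_mult_delta[of "A s" s] by (intro ext) (simp add: srefl_def delta_def diag)

lemma wact_append: "wact (xs @ ys) = wact xs \<circ> wact ys"
  by (induction xs) auto

lemma wact_rev_comp: "wact (rev ws) \<circ> wact ws = id"
  by (induction ws) (auto simp: wact_append fun_eq_iff)

lemma wact_lin: "wact ws (\<lambda>k. p * l k + q * m k) = (\<lambda>k. p * wact ws l k + q * wact ws m k)"
proof -
  have "srefl i (\<lambda>k. p * l k + q * m k) = (\<lambda>k. p * srefl i l k + q * srefl i m k)" for i l m
    by (rule ext) (simp add: srefl_def sum.distrib sum_distrib_left algebra_simps)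
  then show ?thesis by (induction ws arbitrary: l m) auto
qed

lemma wact_uminus: "wact ws (\<lambda>k. - l k) = (\<lambda>k. - wact ws l k)"
  using wact_lin[of ws "-1" l 0 l] by simp

definition wlen_on :: "'i set \<Rightarrow> (('i \<Rightarrow> int) \<Rightarrow> ('i \<Rightarrow> int)) \<Rightarrow> nat" where
  "wlen_on S f = (LEAST l. \<exists>ws. set ws \<subseteq> S \<and> length ws = l \<and> wact ws = f)"

abbreviation wlen :: "(('i \<Rightarrow> int) \<Rightarrow> ('i \<Rightarrow> int)) \<Rightarrow> nat" where
  "wlen \<equiv> wlen_on UNIV"

lemma wlen_on_le: "set ws \<subseteq> S \<Longrightarrow> wact ws = f \<Longrightarrow> wlen_on S f \<le> length ws"
  unfolding wlen_on_def by (rule Least_le) auto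

lemma wlen_on_ex:
  "set vs \<subseteq> S \<Longrightarrow> wact vs = f \<Longrightarrow> \<exists>ws. set ws \<subseteq> S \<and> length ws = wlen_on S f \<and> wact ws = f"
  unfolding wlen_on_def by (rule LeastI_ex) auto

lemma wlen_le_wlen_on: "set vs \<subseteq> S \<Longrightarrow> wact vs = f \<Longrightarrow> wlen f \<le> wlen_on S f"
  by (metis wlen_on_ex wlen_on_le subset_UNIV)

lemma wlen_on_comp:
  assumes "set xs \<subseteq> S" "set ys \<subseteq> S"
  shows "wlen_on S (wact xs \<circ> wact ys) \<le> wlen_on S (wact xs) + wlen_on S (wact ys)"
proof -
  obtain xs' ys' where "set xs' \<subseteq> S" "length xs' = wlen_on S (wact xs)" "wact xs' = wact xs"
      "set ys' \<subseteq> S" "length ys' = wlen_on S (wact ys)" "wact ys' = wact ys"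
    using wlen_on_ex assms by metis
  then show ?thesis
    using wlen_on_le[of "xs' @ ys'" S "wact xs \<circ> wact ys"] by (simp add: wact_append)
qed

lemma wlen_on_Cons_le:
  assumes "u \<in> S" "set xs \<subseteq> S"
  shows "wlen_on S (wact (u # xs)) \<le> 1 + wlen_on S (wact xs)"
  using wlen_on_comp[of "[u]" S xs] wlen_on_le[of "[u]" S] assms by simp

lemma wlen_le_factors:
  assumes "set xs \<subseteq> S"
  shows "wlen (wact vs \<circ> wact xs) \<le> wlen (wact vs) + wlen_on S (wact xs)"
  using wlen_on_comp[of vs UNIV xs] wlen_le_wlen_on[OF assms] by simp

fun alt_word :: "'i \<Rightarrow> 'i \<Rightarrow> nat \<Rightarrow> 'i list" where
  "alt_word x y 0 = []" | "alt_word x y (Suc k) = alt_word y x k @ [x]"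

lemma length_alt_word [simp]: "length (alt_word x y k) = k"
  by (induction k arbitrary: x y) auto

lemma set_alt_word: "set (alt_word x y k) \<subseteq> {x, y}"
  by (induction k arbitrary: x y) auto

lemma alt_word_add:
  "alt_word x y (j + k) = alt_word (if even k then x else y) (if even k then y else x) j @ alt_word x y k"
  by (induction k arbitrary: x y) auto

lemma not_distinct_adj_split: "\<not> distinct_adj zs \<Longrightarrow> \<exists>us y vs. zs = us @ [y, y] @ vs"
proof (induction zs)
  case (Cons x zs)
  show ?case
  proof (cases "zs \<noteq> [] \<and> x = hd zs")
    case True
    then show ?thesis by (intro exI[of _ "[]"] exI[of _ x] exI[of _ "tl zs"]) auto
  next
    case False
    with Cons obtain us y vs where "zs = us @ [y, y] @ vs" by (auto simp: distinct_adj_Cons)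
    then show ?thesis by (intro exI[of _ "x # us"]) auto
  qed
qed simp

lemma distinct_adj_eq_alt_word:
  "s \<noteq> t \<Longrightarrow> set zs \<subseteq> {s, t} \<Longrightarrow> distinct_adj zs \<Longrightarrow> zs = [] \<or> last zs = t \<Longrightarrow> zs = alt_word t s (length zs)"
proof (induction zs arbitrary: s t rule: rev_induct)
  case (snoc x xs)
  then have "x = t" "distinct_adj xs" "xs = [] \<or> last xs \<noteq> t" "set xs \<subseteq> {s, t}"
    by (auto simp: distinct_adj_append_iff)
  moreover have "xs \<noteq> [] \<Longrightarrow> last xs \<in> {s, t}" using \<open>set xs \<subseteq> {s, t}\<close> last_in_set by blast
  ultimately show ?case using snoc.IH[of t s] snoc.prems(1) by auto
qed simp

definition copair :: "'i \<Rightarrow> ('i \<Rightarrow> int) \<Rightarrow> int" where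
  "copair s l = (\<Sum>k\<in>UNIV. A s k * l k)"

definition plus2 :: "'i \<Rightarrow> 'i \<Rightarrow> ('i \<Rightarrow> int) \<Rightarrow> int \<Rightarrow> int \<Rightarrow> ('i \<Rightarrow> int)" where
  "plus2 s t l x y = (\<lambda>k. l k + x * delta s k + y * delta t k)"

lemma copair_plus2: "copair u (plus2 s t l x y) = copair u l + x * A u s + y * A u t"
proof -
  have "copair u (plus2 s t l x y) =
      (\<Sum>k\<in>UNIV. A u k * l k + (x * A u k) * delta s k + (y * A u k) * delta t k)"
    unfolding copair_def plus2_def by (rule sum.cong) (auto simp: algebra_simps)
  then show ?thesis by (simp add: sum.distrib sum_mult_delta copair_def)
qed

lemma srefl_plus2_left:
  "s \<noteq> t \<Longrightarrow> srefl s (plus2 s t l x y) = plus2 s t l (- x - copair s l - A s t * y) y"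
  using copair_plus2[of s s t l x y, unfolded copair_def] diag[of s]
  by (intro ext) (auto simp: srefl_def plus2_def delta_def algebra_simps copair_def)

lemma srefl_plus2_right:
  "s \<noteq> t \<Longrightarrow> srefl t (plus2 s t l x y) = plus2 s t l x (- y - copair t l - A t s * x)"
  using copair_plus2[of t s t l x y, unfolded copair_def] diag[of t]
  by (intro ext) (auto simp: srefl_def plus2_def delta_def algebra_simps copair_def)

lemma copair_zero: "copair u (\<lambda>_. 0) = 0"
  by (simp add: copair_def)

lemma cartan_rank2_cases:
  assumes "s \<noteq> t"
  shows "(A s t = 0 \<and> A t s = 0) \<or> (A s t = -1 \<and> A t s = -1) \<or> (A s t = -1 \<and> A t s = -2) \<or>
         (A s t = -2 \<and> A t s = -1) \<or> (A s t = -1 \<and> A t s = -3) \<or> (A s t = -3 \<and> A t s = -1)"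
proof (cases "A s t = 0")
  case True
  then show ?thesis using zero_sym by auto
next
  case False
  have le: "A s t \<le> -1" "A t s \<le> -1"
    using False zero_sym offdiag_nonpos assms by (metis le_less zle_diff1_eq diff_0 not_less)+
  have lt4: "A s t * A t s < 4" using rank2_finite assms by auto
  have "(- A s t) * (- A t s) \<ge> 4 * 1" if "A s t \<le> -4"
    using that le by (intro mult_mono) auto
  moreover have "(- A s t) * (- A t s) \<ge> 1 * 4" if "A t s \<le> -4"
    using that le by (intro mult_mono) auto
  ultimately have "A s t \<in> {-3, -2, -1}" "A t s \<in> {-3, -2, -1}" using le lt4 by force+
  then show ?thesis using lt4 by auto
qed

definition braid_order :: "'i \<Rightarrow> 'i \<Rightarrow> nat" where
  "braid_order s t =
     (if A s t = 0 then 2 else if A s t * A t s = 1 then 3 else if A s t * A t s = 2 then 4 else 6)"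

lemma braid_relation:
  assumes st: "s \<noteq> t"
  shows "wact (alt_word t s (braid_order s t)) = wact (alt_word s t (braid_order s t))"
proof (rule ext)
  fix l
  have l: "l = plus2 s t l 0 0" by (simp add: plus2_def)
  from cartan_rank2_cases[OF st]
  show "wact (alt_word t s (braid_order s t)) l = wact (alt_word s t (braid_order s t)) l"
    apply (elim disjE conjE)
    by (subst (1 2) l, simp add: braid_order_def eval_nat_numeral wact_append
          srefl_plus2_left[OF st] srefl_plus2_right[OF st],
        (rule arg_cong2[where f = "plus2 s t l"]; simp add: algebra_simps)?)+
qed

lemma plus2_nonneg_witness:
  "0 \<le> p \<Longrightarrow> 0 \<le> q \<Longrightarrow> \<exists>p' q'. plus2 s t z p q = plus2 s t z p' q' \<and> 0 \<le> p' \<and> 0 \<le> q'"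
  by blast

lemma dihedral_short_image:
  assumes st: "s \<noteq> t" and k: "k < braid_order s t"
  shows "\<exists>p q. wact (alt_word t s k) (delta s) = plus2 s t (\<lambda>_. 0) p q \<and> p \<ge> 0 \<and> q \<ge> 0"
proof -
  have delta: "delta s = plus2 s t (\<lambda>_. 0) 1 0" by (rule ext) (simp add: plus2_def)
  have "k = 0 \<or> k = 1 \<or> k = 2 \<or> k = 3 \<or> k = 4 \<or> k = 5"
    using k by (auto simp: braid_order_def split: if_splits)
  with cartan_rank2_cases[OF st] k show ?thesis
    apply (elim disjE conjE)
    by (simp_all add: delta braid_order_def eval_nat_numeral wact_append
          srefl_plus2_left[OF st] srefl_plus2_right[OF st] copair_zero plus2_nonneg_witness)
qed

lemma alt_word_long_srefl:
  assumes st: "s \<noteq> t" and k: "braid_order s t \<le> k"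
  obtains ys where "set ys \<subseteq> {s, t}" "length ys + 1 = k" "wact (alt_word t s k) \<circ> srefl s = wact ys"
proof -
  define m where "m = braid_order s t"
  obtain j where j: "k = j + m" using k by (metis le_add_diff_inverse2 m_def)
  have m: "m = Suc (m - 1)" by (simp add: m_def braid_order_def)
  define X Y where "X = (if even m then t else s)" and "Y = (if even m then s else t)"
  have "wact (alt_word t s m) = wact (alt_word s t m)" using braid_relation[OF st] by (simp add: m_def)
  also have "alt_word s t m = alt_word t s (m - 1) @ [s]" by (subst m) simp
  finally have "wact (alt_word t s m) = wact (alt_word t s (m - 1)) \<circ> srefl s"
    by (simp add: wact_append fun_eq_iff)
  moreover have "alt_word t s k = alt_word X Y j @ alt_word t s m"
    unfolding j X_def Y_def by (rule alt_word_add)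
  ultimately have "wact (alt_word t s k) \<circ> srefl s = wact (alt_word X Y j @ alt_word t s (m - 1))"
    by (simp add: wact_append comp_assoc)
  moreover have "set (alt_word X Y j @ alt_word t s (m - 1)) \<subseteq> {s, t}"
    using set_alt_word[of X Y j] set_alt_word[of t s "m - 1"] by (auto simp: X_def Y_def)
  moreover have "length (alt_word X Y j @ alt_word t s (m - 1)) + 1 = k" using j m by simp
  ultimately show ?thesis using that by blast
qed

lemma dihedral_reduced_alt_word:
  assumes st: "s \<noteq> t" and xs: "set xs \<subseteq> {s, t}"
    and le: "wlen_on {s, t} (wact xs) \<le> wlen_on {s, t} (wact xs \<circ> srefl s)"
  shows "\<exists>k < braid_order s t. wact xs = wact (alt_word t s k)"
proof -
  obtain zs where zs: "set zs \<subseteq> {s, t}" "length zs = wlen_on {s, t} (wact xs)" "wact zs = wact xs"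
    using wlen_on_ex[OF xs HOL.refl] by blast
  have not_shorter: "length zs \<le> length ys" if "wact xs \<circ> srefl s = wact ys" "set ys \<subseteq> {s, t}" for ys
    using wlen_on_le[OF that(2) that(1)[symmetric]] le zs(2) by simp
  have "distinct_adj zs"
  proof (rule ccontr)
    assume "\<not> distinct_adj zs"
    then obtain us y vs where u: "zs = us @ [y, y] @ vs" using not_distinct_adj_split by blast
    then have "wact (us @ vs) = wact xs" using zs(3) by (simp add: wact_append fun_eq_iff)
    then show False using wlen_on_le[of "us @ vs" "{s, t}"] zs u by auto
  qed
  moreover have "zs = [] \<or> last zs = t"
  proof (rule ccontr)
    assume "\<not> (zs = [] \<or> last zs = t)"
    then have "zs \<noteq> []" "last zs = s" using zs(1) last_in_set[of zs] by blast+
    then obtain us where u: "zs = us @ [s]" by (metis append_butlast_last_id)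
    then have "wact xs = wact us \<circ> srefl s" using zs(3) by (simp add: wact_append)
    then have "wact xs \<circ> srefl s = wact us" by (simp add: comp_assoc)
    moreover have "set us \<subseteq> {s, t}" using zs(1) u by simp
    ultimately show False using not_shorter u by fastforce
  qed
  ultimately have alt: "zs = alt_word t s k" if "k = length zs" for k
    using distinct_adj_eq_alt_word[OF st zs(1)] that by blast
  have "length zs < braid_order s t"
  proof (rule ccontr)
    assume "\<not> length zs < braid_order s t"
    then obtain ys where "set ys \<subseteq> {s, t}" "length ys + 1 = length zs" "wact xs \<circ> srefl s = wact ys"
      using alt_word_long_srefl[OF st, of "length zs"] alt[OF HOL.refl] zs(3) by (metis not_less)
    then show False using not_shorter by fastforce
  qed
  moreover have "wact xs = wact (alt_word t s (length zs))" using alt[OF HOL.refl] zs(3) by metis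
  ultimately show ?thesis by blast
qed

lemma rank2_nonneg_image:
  assumes "s \<noteq> t" "set xs \<subseteq> {s, t}"
    and "wlen_on {s, t} (wact xs) \<le> wlen_on {s, t} (wact xs \<circ> srefl s)"
  shows "\<exists>p q. wact xs (delta s) = plus2 s t (\<lambda>_. 0) p q \<and> p \<ge> 0 \<and> q \<ge> 0"
proof -
  obtain k where k: "k < braid_order s t" and w: "wact xs = wact (alt_word t s k)"
    using dihedral_reduced_alt_word[OF assms] by blast
  show ?thesis unfolding w by (rule dihedral_short_image[OF assms(1) k])
qed

lemma parabolic_factorization:
  assumes u: "u \<in> S" and shorter: "wlen (wact ws \<circ> srefl u) < wlen (wact ws)"
  obtains vs xs where "set xs \<subseteq> S" "wact ws = wact vs \<circ> wact xs" "wlen (wact vs) < wlen (wact ws)"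
    "wlen (wact vs) + wlen_on S (wact xs) = wlen (wact ws)"
    "\<And>u. u \<in> S \<Longrightarrow> wlen (wact vs) \<le> wlen (wact vs \<circ> srefl u)"
proof -
  define w where "w = wact ws"
  define F where "F = {(vs, xs). set xs \<subseteq> S \<and> w = wact vs \<circ> wact xs \<and>
                        wlen (wact vs) + wlen_on S (wact xs) = wlen w}"
  have F_intro: "(vs, xs) \<in> F"
    if xs: "set xs \<subseteq> S" and w: "w = wact vs \<circ> wact xs"
      and le: "wlen (wact vs) + wlen_on S (wact xs) \<le> wlen w" for vs xs
  proof -
    have "wlen w \<le> wlen (wact vs) + wlen_on S (wact xs)" unfolding w by (rule wlen_le_factors[OF xs])
    then show ?thesis using xs w le by (simp add: F_def)
  qed
  have w_start: "w = wact (ws @ [u]) \<circ> wact [u]" by (simp add: w_def wact_append fun_eq_iff)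
  have shorter_start: "wlen (wact (ws @ [u])) < wlen w" using shorter by (simp add: w_def wact_append)
  have start: "(ws @ [u], [u]) \<in> F"
    by (rule F_intro[OF _ w_start]) (use u wlen_on_le[of "[u]" S] shorter_start in auto)
  obtain vx where "vx \<in> F" and vmin: "\<And>vx'. vx' \<in> F \<Longrightarrow> wlen (wact (fst vx)) \<le> wlen (wact (fst vx'))"
    using ex_has_least_nat[of "\<lambda>vx. vx \<in> F" _ "\<lambda>vx. wlen (wact (fst vx))", OF start] by blast
  then obtain vs xs where vx: "vx = (vs, xs)" and xs: "set xs \<subseteq> S" "w = wact vs \<circ> wact xs"
    "wlen (wact vs) + wlen_on S (wact xs) = wlen w"
    unfolding F_def by blast
  have shorter_vs: "wlen (wact vs) < wlen w"
    using vmin[OF start] vx shorter_start by simp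
  have min_vs: "wlen (wact vs) \<le> wlen (wact vs \<circ> srefl u')" if u': "u' \<in> S" for u'
  proof (rule ccontr)
    assume less: "\<not> ?thesis"
    have v': "wact (vs @ [u']) = wact vs \<circ> srefl u'" by (simp add: wact_append)
    have w': "w = wact (vs @ [u']) \<circ> wact (u' # xs)"
      unfolding xs(2) by (simp add: wact_append fun_eq_iff)
    have "wlen_on S (wact (u' # xs)) \<le> 1 + wlen_on S (wact xs)" by (rule wlen_on_Cons_le[OF u' xs(1)])
    then have le: "wlen (wact (vs @ [u'])) + wlen_on S (wact (u' # xs)) \<le> wlen w"
      using less xs(3) unfolding v' by linarith
    have "(vs @ [u'], u' # xs) \<in> F"
      by (rule F_intro[OF _ w' le]) (use u' xs(1) in simp)
    then show False using vmin[of "(vs @ [u'], u' # xs)"] vx less v' by simp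
  qed
  show ?thesis
    by (rule that[OF xs(1)]) (use xs(2,3) shorter_vs min_vs in \<open>simp_all add: w_def\<close>)
qed

theorem delta_image_nonneg:
  "wlen (wact ws) \<le> wlen (wact ws \<circ> srefl s) \<Longrightarrow> 0 \<le> wact ws (delta s) k"
proof (induction "wlen (wact ws)" arbitrary: ws s k rule: less_induct)
  case less
  show ?case
  proof (cases "wlen (wact ws) = 0")
    case True
    then have "wact ws = id" using wlen_on_ex[of ws UNIV] by auto
    then show ?thesis by (simp add: delta_def)
  next
    case False
    obtain zs where zs: "length zs = wlen (wact ws)" "wact zs = wact ws"
      using wlen_on_ex[of ws UNIV] by auto
    then obtain ys t where "zs = ys @ [t]" using False by (cases zs rule: rev_cases) auto
    then have "wact ws = wact ys \<circ> srefl t" using zs(2) by (simp add: wact_append)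
    then have "wact ws \<circ> srefl t = wact ys" by (simp add: comp_assoc)
    then have t: "wlen (wact ws \<circ> srefl t) < wlen (wact ws)"
      using wlen_on_le[of ys UNIV] zs(1) \<open>zs = ys @ [t]\<close> by simp
    then have st: "s \<noteq> t" using less.prems by auto
    obtain vs xs where xs: "set xs \<subseteq> {s, t}" and w: "wact ws = wact vs \<circ> wact xs"
      and v: "wlen (wact vs) < wlen (wact ws)" and add: "wlen (wact vs) + wlen_on {s, t} (wact xs) = wlen (wact ws)"
      and vmin: "\<And>u. u \<in> {s, t} \<Longrightarrow> wlen (wact vs) \<le> wlen (wact vs \<circ> srefl u)"
      by (rule parabolic_factorization[of t "{s, t}" ws]) (use t in auto)
    have "wlen_on {s, t} (wact xs) \<le> wlen_on {s, t} (wact xs \<circ> srefl s)"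
    proof (rule ccontr)
      assume "\<not> ?thesis"
      moreover have "wlen (wact ws \<circ> srefl s) \<le> wlen (wact vs) + wlen_on {s, t} (wact (xs @ [s]))"
        using wlen_le_factors[of "xs @ [s]" "{s, t}" vs] xs by (simp add: w wact_append comp_assoc)
      ultimately show False using less.prems add by (simp add: wact_append)
    qed
    then obtain p q where pq: "wact xs (delta s) = plus2 s t (\<lambda>_. 0) p q" "p \<ge> 0" "q \<ge> 0"
      using rank2_nonneg_image[OF st xs] by blast
    have "wact ws (delta s) = wact vs (\<lambda>k. p * delta s k + q * delta t k)"
      using pq(1) by (simp add: w plus2_def)
    also have "\<dots> = (\<lambda>k. p * wact vs (delta s) k + q * wact vs (delta t) k)"
      by (rule wact_lin)
    finally show ?thesis using less.hyps[OF v] vmin pq(2,3) by simp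
  qed
qed

corollary delta_image_sign_coherent:
  "(\<forall>k. 0 \<le> wact ws (delta s) k) \<or> (\<forall>k. wact ws (delta s) k \<le> 0)"
proof (cases "wlen (wact ws) \<le> wlen (wact ws \<circ> srefl s)")
  case True
  then show ?thesis using delta_image_nonneg by blast
next
  case False
  then have "wlen (wact (ws @ [s])) \<le> wlen (wact (ws @ [s]) \<circ> srefl s)"
    by (simp add: wact_append comp_assoc)
  then have "0 \<le> wact (ws @ [s]) (delta s) k" for k by (rule delta_image_nonneg)
  then show ?thesis by (simp add: wact_append srefl_delta_self wact_uminus)
qed

end

section \<open>The integral pairing, reflections and quadratic forms\<close>

lemma ipair_add_left: "ipair (y + z) x = ipair y x + ipair z x"
  by (simp add: ipair_def algebra_simps sum.distrib)
lemma ipair_add_right: "ipair y (x + z) = ipair y x + ipair y z"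
  by (simp add: ipair_def algebra_simps sum.distrib)
lemma ipair_diff_left: "ipair (y - z) x = ipair y x - ipair z x"
  by (simp add: ipair_def algebra_simps sum_subtractf)
lemma ipair_diff_right: "ipair y (x - z) = ipair y x - ipair y z"
  by (simp add: ipair_def algebra_simps sum_subtractf)
lemma ipair_uminus_left: "ipair (- y) x = - ipair y x"
  by (simp add: ipair_def sum_negf)
lemma ipair_uminus_right: "ipair y (- x) = - ipair y x"
  by (simp add: ipair_def sum_negf)
lemma ipair_smult_left: "ipair (k *s y) x = k * ipair y x"
  by (simp add: ipair_def sum_distrib_left algebra_simps)
lemma ipair_smult_right: "ipair y (k *s x) = k * ipair y x"
  by (simp add: ipair_def sum_distrib_left algebra_simps)
lemma ipair_sum_left: "ipair (\<Sum>i\<in>S. f i) x = (\<Sum>i\<in>S. ipair (f i) x)"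
  by (simp add: ipair_def sum_distrib_right sum_component) (rule sum.swap)
lemma ipair_sum_right: "ipair y (\<Sum>i\<in>S. f i) = (\<Sum>i\<in>S. ipair y (f i))"
  by (simp add: ipair_def sum_distrib_left sum_component) (rule sum.swap)

lemmas ipair_simps = ipair_add_left ipair_add_right ipair_diff_left ipair_diff_right ipair_uminus_left ipair_uminus_right
  ipair_smult_left ipair_smult_right ipair_sum_left ipair_sum_right

lemma ipair_rv: "real_of_int (ipair y x) = rv y \<bullet> rv x"
  by (simp add: ipair_def rv_def inner_vec_def)

lemma rv_add: "rv (x + y) = rv x + rv y" by (simp add: rv_def vec_eq_iff)
lemma rv_diff: "rv (x - y) = rv x - rv y" by (simp add: rv_def vec_eq_iff)
lemma rv_uminus: "rv (- x) = - rv x" by (simp add: rv_def vec_eq_iff)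
lemma rv_smult: "rv (k *s x) = real_of_int k *\<^sub>R rv x" by (simp add: rv_def vec_eq_iff)
lemma rv_zero: "rv 0 = 0" by (simp add: rv_def vec_eq_iff)
lemma rv_sum: "rv (\<Sum>i\<in>S. f i) = (\<Sum>i\<in>S. rv (f i))"
  by (induction S rule: infinite_finite_induct) (auto simp: rv_add rv_zero)
lemma rv_inj: "rv x = rv y \<Longrightarrow> x = y" by (simp add: rv_def vec_eq_iff)

lemma reflX_adj: "ipair (reflY cor rt i y) x = ipair y (reflX cor rt i x)"
  by (simp add: reflX_def reflY_def ipair_simps algebra_simps)

lemma reflX_invol: "ipair (cor i) (rt i) = 2 \<Longrightarrow> reflX cor rt i (reflX cor rt i a) = a"
  by (simp add: reflX_def ipair_simps algebra_simps vec_eq_iff)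

definition reflX_by :: "int^'n \<Rightarrow> int^'n \<Rightarrow> int^'n \<Rightarrow> int^'n" where
  "reflX_by a c x = x - ipair c x *s a"
definition reflY_by :: "int^'n \<Rightarrow> int^'n \<Rightarrow> int^'n \<Rightarrow> int^'n" where
  "reflY_by a c y = y - ipair y a *s c"

lemma reflX_by_simple: "reflX_by (rt i) (cor i) = reflX cor rt i" by (simp add: fun_eq_iff reflX_by_def reflX_def)
lemma reflY_by_simple: "reflY_by (rt i) (cor i) = reflY cor rt i" by (simp add: fun_eq_iff reflY_by_def reflY_def)

lemma reflX_by_conj:
  assumes "ipair (cor i) (rt i) = 2"
  shows "reflX_by (reflX cor rt i a) (reflY cor rt i c) x = reflX cor rt i (reflX_by a c (reflX cor rt i x))"
  using assms by (simp add: reflX_by_def reflX_def reflY_def ipair_simps algebra_simps vec_eq_iff)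

lemma reflY_by_conj:
  assumes "ipair (cor i) (rt i) = 2"
  shows "reflY_by (reflX cor rt i a) (reflY cor rt i c) y = reflY cor rt i (reflY_by a c (reflY cor rt i y))"
  using assms by (simp add: reflY_by_def reflX_def reflY_def ipair_simps algebra_simps vec_eq_iff)

lemma sum_sum_two_support:
  fixes F :: "'a::finite \<Rightarrow> 'a \<Rightarrow> 'b::comm_monoid_add"
  assumes "i \<noteq> j" and "\<And>k l. F k l \<noteq> 0 \<Longrightarrow> k \<in> {i, j} \<and> l \<in> {i, j}"
  shows "(\<Sum>k\<in>UNIV. \<Sum>l\<in>UNIV. F k l) = F i i + F i j + (F j i + F j j)"
proof -
  have inner: "(\<Sum>l\<in>UNIV. F k l) = (\<Sum>l\<in>{i, j}. F k l)" for k
    by (rule sum.mono_neutral_right) (use assms(2) in auto)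
  have "(\<Sum>k\<in>UNIV. \<Sum>l\<in>{i, j}. F k l) = (\<Sum>k\<in>{i, j}. \<Sum>l\<in>{i, j}. F k l)"
    by (rule sum.mono_neutral_right) (auto intro!: sum.neutral dest: assms(2))
  then show ?thesis using assms(1) by (simp add: inner)
qed

lemma Bf_commute: "Bf Q y z = Bf Q z y"
  by (simp add: Bf_def add.commute)

context
  fixes Q :: "int^'n \<Rightarrow> int"
  assumes quad: "quadratic_form Q"
begin

lemma Q_smult: "Q (k *s y) = k\<^sup>2 * Q y"
  using quad by (simp add: quadratic_form_def)

lemma Bf_add_left: "Bf Q (y + y') z = Bf Q y z + Bf Q y' z"
  using quad by (simp add: quadratic_form_def)

lemma Bf_add_right: "Bf Q y (z + z') = Bf Q y z + Bf Q y z'"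
  using quad by (simp add: quadratic_form_def)

lemma Q_uminus: "Q (- y) = Q y"
proof -
  have "- y = (-1) *s y" by (simp add: vec_eq_iff)
  then show ?thesis using Q_smult[of "-1" y] by simp
qed

lemma Bf_smult_right: "Bf Q y (k *s z) = k * Bf Q y z"
proof -
  have Bf_zero: "Bf Q y 0 = 0" using Q_smult[of 0 0] by (simp add: Bf_def)
  have nat: "Bf Q y (int m *s z) = int m * Bf Q y z" for m
  proof (induction m)
    case (Suc m)
    have "int (Suc m) *s z = int m *s z + z" by (simp add: vec_eq_iff algebra_simps)
    then show ?case using Suc Bf_add_right by (simp add: algebra_simps)
  qed (simp add: Bf_zero)
  show ?thesis
  proof (cases "k \<ge> 0")
    case True
    then show ?thesis using nat[of "nat k"] by simp
  next
    case False
    have "Bf Q y (- w) = - Bf Q y w" for w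
      using Bf_add_right[of y w "- w"] Bf_zero by simp
    moreover have "k *s z = - (int (nat (- k)) *s z)" using False by (simp add: vec_eq_iff)
    ultimately show ?thesis using nat[of "nat (- k)"] False by simp
  qed
qed

lemma Bf_self: "Bf Q c c = 2 * Q c"
proof -
  have "c + c = 2 *s c" by (simp add: vec_eq_iff)
  then show ?thesis using Q_smult[of 2 c] by (simp add: Bf_def)
qed

end

lemma nQ_cong: "Q c = Q c' \<Longrightarrow> nQ Q n c = nQ Q n c'"
  by (simp add: nQ_def)

lemma nQ_uminus: "quadratic_form Q \<Longrightarrow> nQ Q n (- c) = nQ Q n c"
  by (rule nQ_cong) (rule Q_uminus)

context
  fixes n :: nat
  assumes n_gt0: "0 < n"
begin

lemma nQ_pos_dvd: "0 < nQ Q n c \<and> int n dvd int (nQ Q n c) * Q c"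
  unfolding nQ_def by (rule LeastI[of _ n]) (simp add: n_gt0)

lemmas nQ_pos = nQ_pos_dvd[THEN conjunct1] and nQ_dvd = nQ_pos_dvd[THEN conjunct2]

lemma nQ_dvdI:
  assumes "int n dvd m * Q c"
  shows "int (nQ Q n c) dvd m"
proof -
  define N where "N = int (nQ Q n c)"
  define r where "r = m mod N"
  have r: "0 \<le> r" "r < N" using nQ_pos[of Q c] by (auto simp: r_def N_def)
  have "r * Q c = m * Q c - (m div N) * (N * Q c)"
    by (simp add: r_def algebra_simps minus_div_mult_eq_mod[symmetric])
  then have dvd: "int n dvd int (nat r) * Q c"
    using assms nQ_dvd[of Q c] r N_def by (simp add: dvd_diff dvd_mult)
  have "r = 0"
  proof (rule ccontr)
    assume "r \<noteq> 0"
    then have "nQ Q n c \<le> nat r" unfolding nQ_def using dvd r by (intro Least_le) simp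
    then show False using r N_def by simp
  qed
  then show ?thesis by (simp add: r_def N_def dvd_eq_mod_eq_0)
qed

end

section \<open>Root pairs\<close>

type_synonym 'n affroot = "(int^'n) \<times> (int^'n) \<times> int"

locale twisted_root_datum =
  fixes cor rt :: "'i::finite \<Rightarrow> int^'n" and Q :: "int^'n \<Rightarrow> int" and n :: nat
    and theta :: "int^'n" and d :: "'i \<Rightarrow> real"
  assumes dpos: "\<And>i. d i > 0"
    and dsym: "\<And>i j. d i * ipair (cor i) (rt j) = d j * ipair (cor j) (rt i)"
    and pdef: "\<And>x. x \<noteq> (\<lambda>_. 0) \<Longrightarrow> (\<Sum>i\<in>UNIV. \<Sum>j\<in>UNIV. x i * d i * of_int (ipair (cor i) (rt j)) * x j) > 0"
    and cartan_diag: "\<And>i. ipair (cor i) (rt i) = 2"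
    and cartan_offdiag: "\<And>i j. i \<noteq> j \<Longrightarrow> ipair (cor i) (rt j) \<le> 0"
    and cartan_zero_sym: "\<And>i j. ipair (cor i) (rt j) = 0 \<longleftrightarrow> ipair (cor j) (rt i) = 0"
    and n_gt0: "0 < n" and quad: "quadratic_form Q" and inv: "W_invariant cor rt Q"
    and highest: "tw_highest cor rt Q n theta"
begin

abbreviation cartan :: "'i \<Rightarrow> 'i \<Rightarrow> int" where "cartan i j \<equiv> ipair (cor i) (rt j)"

lemma rank2_finite:
  assumes ij: "i \<noteq> j"
  shows "cartan i j * cartan j i < 4"
proof -
  define x :: "'i \<Rightarrow> real" where "x = (\<lambda>k. if k = i then - of_int (cartan i j) else if k = j then 2 else 0)"
  have "x \<noteq> (\<lambda>_. 0)" using ij by (auto simp: x_def fun_eq_iff)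
  then have "0 < (\<Sum>k\<in>UNIV. \<Sum>l\<in>UNIV. x k * d k * of_int (cartan k l) * x l)" by (rule pdef)
  also have "\<dots> = 2 * d j * (4 - of_int (cartan i j) * of_int (cartan j i))"
    using ij by (subst sum_sum_two_support[OF ij]) (auto simp: x_def cartan_diag algebra_simps split: if_splits)
  finally show ?thesis using dpos[of j] by (simp add: zero_less_mult_iff flip: of_int_mult)
qed

sublocale cartan_matrix cartan
  by unfold_locales (auto simp: cartan_diag cartan_offdiag cartan_zero_sym rank2_finite)

abbreviation RP where "RP \<equiv> rootpairs cor rt"

lemma rootpair_pairing: "(a,c) \<in> RP \<Longrightarrow> ipair c a = 2"
proof (induction rule: rootpairs.induct)
  case (simple i) then show ?case by (simp add: cartan_diag)
next
  case (refl a c i) then show ?case by (simp add: reflX_adj reflX_invol cartan_diag)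
qed

lemma rootpairs_reflect: "(a,c) \<in> RP \<Longrightarrow> (a',c') \<in> RP \<Longrightarrow> (reflX_by a c a', reflY_by a c c') \<in> RP"
proof (induction arbitrary: a' c' rule: rootpairs.induct)
  case (simple i) then show ?case by (simp add: reflX_by_simple reflY_by_simple rootpairs.refl)
next
  case (refl a c i)
  have "(reflX cor rt i a', reflY cor rt i c') \<in> RP" using refl.prems by (rule rootpairs.refl)
  then have "(reflX_by a c (reflX cor rt i a'), reflY_by a c (reflY cor rt i c')) \<in> RP" by (rule refl.IH)
  then have "(reflX cor rt i (reflX_by a c (reflX cor rt i a')), reflY cor rt i (reflY_by a c (reflY cor rt i c'))) \<in> RP"
    by (rule rootpairs.refl)
  then show ?case by (simp add: reflX_by_conj reflY_by_conj cartan_diag)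
qed

lemma rootpairs_neg: "(a,c) \<in> RP \<Longrightarrow> (-a,-c) \<in> RP"
proof -
  assume h: "(a,c) \<in> RP"
  have "(reflX_by a c a, reflY_by a c c) \<in> RP" using rootpairs_reflect[OF h h] .
  moreover have "reflX_by a c a = -a" "reflY_by a c c = -c" using rootpair_pairing[OF h]
    by (auto simp: reflX_by_def reflY_by_def vec_eq_iff)
  ultimately show ?thesis by simp
qed

lemma Q_reflY_by: "(a,c) \<in> RP \<Longrightarrow> Q (reflY_by a c y) = Q y"
proof (induction arbitrary: y rule: rootpairs.induct)
  case (simple i) then show ?case using inv by (simp add: reflY_by_simple W_invariant_def)
next
  case (refl a c i)
  have "Q (reflY_by (reflX cor rt i a) (reflY cor rt i c) y) = Q (reflY cor rt i (reflY_by a c (reflY cor rt i y)))"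
    by (simp add: reflY_by_conj cartan_diag)
  also have "\<dots> = Q (reflY_by a c (reflY cor rt i y))" using inv by (simp add: W_invariant_def)
  also have "\<dots> = Q (reflY cor rt i y)" by (rule refl.IH)
  also have "\<dots> = Q y" using inv by (simp add: W_invariant_def)
  finally show ?case .
qed

lemma Bf_coroot:
  assumes h: "(a, c) \<in> RP"
  shows "Bf Q y c = ipair y a * Q c"
proof -
  have nonzero_case: "Bf Q y c = ipair y a * Q c" if m0: "ipair y a \<noteq> 0" for y
  proof -
    define m where "m = ipair y a"
    have "Q (reflY_by a c y) = Q y" by (rule Q_reflY_by[OF h])
    moreover have "reflY_by a c y = y + (- m) *s c" by (simp add: reflY_by_def m_def vec_eq_iff)
    moreover have "Q (y + (- m) *s c) = Bf Q y ((- m) *s c) + Q y + Q ((- m) *s c)" by (simp add: Bf_def)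
    ultimately have "m * (m * Q c - Bf Q y c) = 0"
      using Bf_smult_right[OF quad] Q_smult[OF quad] by (simp add: algebra_simps power2_eq_square)
    then show ?thesis using m0 by (simp add: m_def)
  qed
  show ?thesis
  proof (cases "ipair y a = 0")
    case True
    have "ipair c a = 2" by (rule rootpair_pairing[OF h])
    then have "Bf Q (y + c) c = 2 * Q c" using True nonzero_case[of "y + c"] by (simp add: ipair_add_left)
    then show ?thesis using True Bf_self[OF quad] by (simp add: Bf_add_left[OF quad])
  qed (rule nonzero_case)
qed

lemma nQ_reflY_by: "(a,c) \<in> RP \<Longrightarrow> nQ Q n (reflY_by a c y) = nQ Q n y" by (rule nQ_cong) (rule Q_reflY_by)

lemma nQ_dvd_pairing:
  assumes h: "(a,c) \<in> RP" and h': "(a',c') \<in> RP"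
  shows "int (nQ Q n c') dvd ipair c a' * int (nQ Q n c)"
proof (rule nQ_dvdI[OF n_gt0])
  have "ipair c a' * int (nQ Q n c) * Q c' = int (nQ Q n c) * Bf Q c c'"
    using Bf_coroot[OF h', of c] by simp
  also have "\<dots> = int (nQ Q n c) * (ipair c' a * Q c)" using Bf_coroot[OF h, of c'] Bf_commute[of Q c c'] by simp
  also have "\<dots> = ipair c' a * (int (nQ Q n c) * Q c)" by simp
  finally have E: "ipair c a' * int (nQ Q n c) * Q c' = ipair c' a * (int (nQ Q n c) * Q c)" .
  have "int n dvd ipair c' a * (int (nQ Q n c) * Q c)" using nQ_dvd[OF n_gt0, of Q c] by (rule dvd_mult)
  then show "int n dvd ipair c a' * int (nQ Q n c) * Q c'" by (subst E)
qed

definition rootcomb :: "('i \<Rightarrow> int) \<Rightarrow> int^'n" where "rootcomb l = (\<Sum>k\<in>UNIV. l k *s rt k)"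
definition corootcomb :: "('i \<Rightarrow> int) \<Rightarrow> int^'n" where "corootcomb m = (\<Sum>k\<in>UNIV. m k *s cor k)"
definition srefl_dual :: "'i \<Rightarrow> ('i \<Rightarrow> int) \<Rightarrow> ('i \<Rightarrow> int)" where
  "srefl_dual i m = m(i := m i - (\<Sum>k\<in>UNIV. m k * cartan k i))"
definition rcoords :: "('i \<Rightarrow> int) \<Rightarrow> ('i \<Rightarrow> real)" where "rcoords l = (\<lambda>k. real_of_int (l k))"
definition symform :: "('i \<Rightarrow> real) \<Rightarrow> ('i \<Rightarrow> real) \<Rightarrow> real" where
  "symform x y = (\<Sum>j\<in>UNIV. \<Sum>k\<in>UNIV. x j * d j * of_int (cartan j k) * y k)"
definition symnorm :: "('i \<Rightarrow> int) \<Rightarrow> real" where "symnorm l = symform (rcoords l) (rcoords l)"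
definition delta_real :: "'i \<Rightarrow> 'i \<Rightarrow> real" where "delta_real i = (\<lambda>k. if k = i then 1 else 0)"

lemma sum_mult_delta_real: "(\<Sum>k\<in>UNIV. f k * delta_real i k) = f i"
proof -
  have "(\<Sum>k\<in>UNIV. f k * delta_real i k) = (\<Sum>k\<in>UNIV. if k = i then f k else 0)"
    by (rule sum.cong) (auto simp: delta_real_def)
  then show ?thesis by simp
qed

lemma sum_mult_delta_real': "(\<Sum>k\<in>UNIV. delta_real i k * f k) = f i"
  using sum_mult_delta_real[of f i] by (simp add: mult.commute)

lemma symform_lin1: "symform (\<lambda>k. x k + c * y k) z = symform x z + c * symform y z"
  by (simp add: symform_def algebra_simps sum.distrib sum_distrib_left)
lemma symform_lin2: "symform z (\<lambda>k. x k + c * y k) = symform z x + c * symform z y"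
  by (simp add: symform_def algebra_simps sum.distrib sum_distrib_left)
lemma symform_sym: "symform x y = symform y x"
proof -
  have "symform x y = (\<Sum>j\<in>UNIV. \<Sum>k\<in>UNIV. y k * d k * of_int (cartan k j) * x j)"
    unfolding symform_def
  proof (rule sum.cong[OF HOL.refl], rule sum.cong[OF HOL.refl])
    fix j k
    have "d j * of_int (cartan j k) = d k * of_int (cartan k j)" using dsym[of j k] by (simp flip: of_int_mult)
    then show "x j * d j * of_int (cartan j k) * y k = y k * d k * of_int (cartan k j) * x j"
      by (simp add: algebra_simps)
  qed
  also have "\<dots> = symform y x" unfolding symform_def by (rule sum.swap)
  finally show ?thesis .
qed
lemma symform_delta_real: "symform (delta_real i) y = d i * (\<Sum>k\<in>UNIV. of_int (cartan i k) * y k)"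
proof -
  have "symform (delta_real i) y = (\<Sum>j\<in>UNIV. delta_real i j * (\<Sum>k\<in>UNIV. d j * of_int (cartan j k) * y k))"
    unfolding symform_def by (rule sum.cong) (auto simp: sum_distrib_left algebra_simps)
  also have "\<dots> = (\<Sum>k\<in>UNIV. d i * of_int (cartan i k) * y k)" by (rule sum_mult_delta_real')
  finally show ?thesis by (simp add: sum_distrib_left algebra_simps)
qed

lemma rcoords_srefl: "rcoords (srefl i l) = (\<lambda>k. rcoords l k + (- of_int (\<Sum>k\<in>UNIV. cartan i k * l k)) * delta_real i k)"
  by (auto simp: rcoords_def srefl_def delta_real_def fun_eq_iff)

lemma symnorm_srefl: "symnorm (srefl i l) = symnorm l"
proof -
  define x where "x = rcoords l"
  define p where "p = (\<Sum>k\<in>UNIV. of_int (cartan i k) * x k)"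
  have pp: "of_int (\<Sum>k\<in>UNIV. cartan i k * l k) = p" by (simp add: p_def x_def rcoords_def)
  have "symnorm (srefl i l) = symform (\<lambda>k. x k + (-p) * delta_real i k) (\<lambda>k. x k + (-p) * delta_real i k)"
    unfolding symnorm_def rcoords_srefl pp x_def ..
  also have "\<dots> = symform x x - p * symform (delta_real i) x - p * symform x (delta_real i) + p * p * symform (delta_real i) (delta_real i)"
    by (simp only: symform_lin1 symform_lin2) (simp add: algebra_simps)
  also have "symform (delta_real i) (delta_real i) = 2 * d i" by (simp add: symform_delta_real sum_mult_delta_real cartan_diag)
  also have "symform x (delta_real i) = symform (delta_real i) x" by (rule symform_sym)
  also have "symform (delta_real i) x = d i * p" by (simp add: symform_delta_real p_def)
  finally show ?thesis by (simp add: symnorm_def x_def algebra_simps)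
qed

lemma symform_pos_def: "symform x x = 0 \<Longrightarrow> x = (\<lambda>_. 0)"
  using pdef[of x] unfolding symform_def by force

lemma ipair_cor_rootcomb: "ipair (cor i) (rootcomb l) = (\<Sum>k\<in>UNIV. cartan i k * l k)"
  by (simp add: rootcomb_def ipair_sum_right ipair_smult_right mult.commute)
lemma ipair_corootcomb_rt: "ipair (corootcomb m) (rt i) = (\<Sum>k\<in>UNIV. m k * cartan k i)"
  by (simp add: corootcomb_def ipair_sum_left ipair_smult_left)

lemma rootcomb_upd: "rootcomb (l(i := v)) = rootcomb l + (v - l i) *s rt i"
proof -
  have "rootcomb (l(i := v)) = (\<Sum>k\<in>UNIV. l k *s rt k + (if k = i then (v - l i) *s rt i else 0))"
    unfolding rootcomb_def by (rule sum.cong) (auto simp: vec_eq_iff algebra_simps)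
  also have "\<dots> = rootcomb l + (v - l i) *s rt i" by (simp add: sum.distrib rootcomb_def)
  finally show ?thesis .
qed
lemma corootcomb_upd: "corootcomb (m(i := v)) = corootcomb m + (v - m i) *s cor i"
proof -
  have "corootcomb (m(i := v)) = (\<Sum>k\<in>UNIV. m k *s cor k + (if k = i then (v - m i) *s cor i else 0))"
    unfolding corootcomb_def by (rule sum.cong) (auto simp: vec_eq_iff algebra_simps)
  also have "\<dots> = corootcomb m + (v - m i) *s cor i" by (simp add: sum.distrib corootcomb_def)
  finally show ?thesis .
qed

lemma reflX_rootcomb: "reflX cor rt i (rootcomb l) = rootcomb (srefl i l)"
  by (simp add: srefl_def rootcomb_upd reflX_def ipair_cor_rootcomb vec_eq_iff algebra_simps)
lemma reflY_corootcomb: "reflY cor rt i (corootcomb m) = corootcomb (srefl_dual i m)"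
  by (simp add: srefl_dual_def corootcomb_upd reflY_def ipair_corootcomb_rt vec_eq_iff algebra_simps)

lemma rootcomb_delta: "rootcomb (delta j) = rt j"
proof -
  have "rootcomb (delta j) = (\<Sum>k\<in>UNIV. if k = j then rt k else 0)"
    unfolding rootcomb_def by (rule sum.cong) (auto simp: delta_def)
  then show ?thesis by simp
qed
lemma corootcomb_delta: "corootcomb (delta j) = cor j"
proof -
  have "corootcomb (delta j) = (\<Sum>k\<in>UNIV. if k = j then cor k else 0)"
    unfolding corootcomb_def by (rule sum.cong) (auto simp: delta_def)
  then show ?thesis by simp
qed

text \<open>The last clause expresses the
  coroot through the root by the symmetrised form, \<open>c = 2 (a, -) / (a, a)\<close>, which gives
  uniqueness of coroots and reducedness.\<close>

definition root_coords :: "int^'n \<Rightarrow> int^'n \<Rightarrow> ('i \<Rightarrow> int) \<Rightarrow> ('i \<Rightarrow> int) \<Rightarrow> bool" where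
  "root_coords a c l m \<longleftrightarrow> a = rootcomb l \<and> c = corootcomb m \<and> (\<exists>ws j. l = wact ws (delta j)) \<and> symnorm l > 0 \<and>
      (\<forall>k. symnorm l * of_int (m k) = 2 * d k * of_int (l k))"

lemma root_coords_delta: "root_coords (rt j) (cor j) (delta j) (delta j)"
proof -
  have "rcoords (delta j) = delta_real j" by (auto simp: rcoords_def delta_def delta_real_def fun_eq_iff)
  then have q: "symnorm (delta j) = 2 * d j"
    by (simp add: symnorm_def symform_delta_real sum_mult_delta_real sum_mult_delta_real' cartan_diag)
  have "\<exists>ws j'. delta j = wact ws (delta j')" by (rule exI[of _ "[]"], rule exI[of _ j]) simp
  moreover have "\<forall>k. symnorm (delta j) * of_int (delta j k) = 2 * d k * of_int (delta j k)"
    using q by (auto simp: delta_def)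
  ultimately show ?thesis
    unfolding root_coords_def using dpos[of j] by (simp add: rootcomb_delta corootcomb_delta q)
qed

lemma root_coords_srefl:
  assumes g: "root_coords a c l m"
  shows "root_coords (reflX cor rt i a) (reflY cor rt i c) (srefl i l) (srefl_dual i m)"
  unfolding root_coords_def
proof (intro conjI allI)
  obtain ws j where "l = wact ws (delta j)" using g unfolding root_coords_def by blast
  then show "\<exists>ws j. srefl i l = wact ws (delta j)" by (intro exI[of _ "i # ws"] exI[of _ j]) simp
  show "reflX cor rt i a = rootcomb (srefl i l)" using g by (simp add: root_coords_def reflX_rootcomb)
  show "reflY cor rt i c = corootcomb (srefl_dual i m)" using g by (simp add: root_coords_def reflY_corootcomb)
  show "symnorm (srefl i l) > 0" using g by (simp add: root_coords_def symnorm_srefl)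
  fix k
  have F: "\<And>k. symnorm l * of_int (m k) = 2 * d k * of_int (l k)" using g by (simp add: root_coords_def)
  show "symnorm (srefl i l) * of_int (srefl_dual i m k) = 2 * d k * of_int (srefl i l k)"
  proof (cases "k = i")
    case True
    have "symnorm l * of_int (\<Sum>t\<in>UNIV. m t * cartan t i) =
        (\<Sum>t\<in>UNIV. (symnorm l * of_int (m t)) * of_int (cartan t i))"
      by (simp add: sum_distrib_left algebra_simps)
    also have "\<dots> = (\<Sum>t\<in>UNIV. 2 * (d t * of_int (cartan t i)) * of_int (l t))"
      using F by (simp add: algebra_simps)
    also have "\<dots> = (\<Sum>t\<in>UNIV. 2 * (d i * of_int (cartan i t)) * of_int (l t))"
      using dsym by (simp flip: of_int_mult)
    also have "\<dots> = 2 * d i * of_int (\<Sum>t\<in>UNIV. cartan i t * l t)"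
      by (simp add: sum_distrib_left algebra_simps)
    finally show ?thesis
      using True F[of i] by (simp only: symnorm_srefl) (simp add: srefl_dual_def srefl_def algebra_simps)
  next
    case False
    then show ?thesis using F by (simp only: symnorm_srefl) (simp add: srefl_dual_def srefl_def)
  qed
qed

lemma rootpair_coords: "(a, c) \<in> RP \<Longrightarrow> \<exists>l m. root_coords a c l m"
  by (induction rule: rootpairs.induct) (use root_coords_delta root_coords_srefl in blast)+

lemma simple_roots_independent:
  assumes "(\<Sum>k\<in>UNIV. x k *\<^sub>R rv (rt k)) = 0"
  shows "x = (\<lambda>_. 0)"
proof -
  have row: "(\<Sum>k\<in>UNIV. of_int (cartan j k) * x k) = 0" for j
  proof -
    have "rv (cor j) \<bullet> (\<Sum>k\<in>UNIV. x k *\<^sub>R rv (rt k)) = 0" using assms by simp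
    then show ?thesis by (simp add: inner_sum_right ipair_rv[symmetric] algebra_simps)
  qed
  have "symform x x = 0"
  proof -
    have "symform x x = (\<Sum>j\<in>UNIV. x j * d j * (\<Sum>k\<in>UNIV. of_int (cartan j k) * x k))"
      unfolding symform_def by (rule sum.cong) (auto simp: sum_distrib_left algebra_simps)
    then show ?thesis using row by simp
  qed
  then show ?thesis by (rule symform_pos_def)
qed

lemma rv_rootcomb: "rv (rootcomb l) = (\<Sum>k\<in>UNIV. rcoords l k *\<^sub>R rv (rt k))"
  by (simp add: rootcomb_def rv_sum rv_smult rcoords_def)

lemma rootcomb_inj: "rootcomb l = rootcomb l' \<Longrightarrow> l = l'"
proof -
  assume "rootcomb l = rootcomb l'"
  then have "rv (rootcomb l) - rv (rootcomb l') = 0" by simp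
  then have "(\<Sum>k\<in>UNIV. (rcoords l k - rcoords l' k) *\<^sub>R rv (rt k)) = 0"
    by (simp add: rv_rootcomb sum_subtractf scaleR_diff_left)
  then have "(\<lambda>k. rcoords l k - rcoords l' k) = (\<lambda>_. 0)" by (rule simple_roots_independent)
  then show "l = l'" by (auto simp: rcoords_def fun_eq_iff)
qed

lemma root_coords_coroot_unique:
  assumes "root_coords a c l m" "root_coords a c' l' m'"
  shows "c = c'"
proof -
  have "l = l'" using assms rootcomb_inj unfolding root_coords_def by metis
  have "m = m'"
  proof
    fix k
    have F1: "symnorm l * of_int (m k) = 2 * d k * of_int (l k)" using assms(1) unfolding root_coords_def by blast
    have F2: "symnorm l' * of_int (m' k) = 2 * d k * of_int (l' k)" using assms(2) unfolding root_coords_def by blast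
    have P: "symnorm l > 0" using assms(1) unfolding root_coords_def by blast
    have "symnorm l * of_int (m k) = symnorm l * of_int (m' k)" using F1 F2 \<open>l = l'\<close> by simp
    then have "real_of_int (m k) = of_int (m' k)" using P by simp
    then show "m k = m' k" by simp
  qed
  then show ?thesis using assms unfolding root_coords_def by simp
qed

lemma rootpairs_coroot_unique: "(a,c) \<in> RP \<Longrightarrow> (a,c') \<in> RP \<Longrightarrow> c = c'"
  using rootpair_coords root_coords_coroot_unique by metis

lemma coroot_eq: "(a,c) \<in> RP \<Longrightarrow> coroot cor rt a = c"
  unfolding coroot_def using rootpairs_coroot_unique by blast

lemma roots_rootpair: "a \<in> roots cor rt \<Longrightarrow> (a, coroot cor rt a) \<in> RP"
  unfolding roots_def using coroot_eq by force

lemma rootpair_sign_coherent: "(a,c) \<in> RP \<Longrightarrow> \<exists>l. a = rootcomb l \<and> ((\<forall>k. l k \<ge> 0) \<or> (\<forall>k. l k \<le> 0))"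
  using rootpair_coords delta_image_sign_coherent unfolding root_coords_def by metis

definition srefl_real :: "'i \<Rightarrow> ('i \<Rightarrow> real) \<Rightarrow> ('i \<Rightarrow> real)" where
  "srefl_real i x = x(i := x i - (\<Sum>k\<in>UNIV. of_int (cartan i k) * x k))"

fun wact_real :: "'i list \<Rightarrow> ('i \<Rightarrow> real) \<Rightarrow> ('i \<Rightarrow> real)" where
  "wact_real [] = id" | "wact_real (i#ws) = srefl_real i \<circ> wact_real ws"

lemma rcoords_wact: "rcoords (wact ws l) = wact_real ws (rcoords l)"
  by (induction ws) (auto simp: rcoords_def srefl_real_def srefl_def fun_eq_iff)

lemma srefl_real_smult: "srefl_real i (\<lambda>k. C * x k) = (\<lambda>k. C * srefl_real i x k)"
  by (auto simp: srefl_real_def fun_eq_iff sum_distrib_left algebra_simps)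

lemma wact_real_smult: "wact_real ws (\<lambda>k. C * x k) = (\<lambda>k. C * wact_real ws x k)"
  by (induction ws) (auto simp: srefl_real_smult)

lemma wact_rev_wact: "wact (rev ws) (wact ws x) = x"
  using wact_rev_comp[of ws] by (simp add: fun_eq_iff)

lemma rootpair_wact: "(rootcomb l, c) \<in> RP \<Longrightarrow> \<exists>c'. (rootcomb (wact vs l), c') \<in> RP"
proof (induction vs)
  case Nil then show ?case by auto
next
  case (Cons i vs)
  then obtain c' where "(rootcomb (wact vs l), c') \<in> RP" by blast
  then have "(reflX cor rt i (rootcomb (wact vs l)), reflY cor rt i c') \<in> RP" by (rule rootpairs.refl)
  then show ?case by (auto simp: reflX_rootcomb)
qed

lemma symform_scale: "symform (\<lambda>k. C * x k) (\<lambda>k. C * y k) = C * C * symform x y"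
  by (simp add: symform_def sum_distrib_left algebra_simps)

lemma rootpairs_reduced:
  assumes h: "(a,c) \<in> RP" and h': "(a',c') \<in> RP" and eq: "rv a = C *\<^sub>R rv a'" and C: "C > 0"
  shows "a = a' \<and> C = 1"
proof -
  obtain l m where g: "root_coords a c l m" using rootpair_coords[OF h] by blast
  obtain l' m' where g': "root_coords a' c' l' m'" using rootpair_coords[OF h'] by blast
  obtain ws j where lw: "l' = wact ws (delta j)" using g' unfolding root_coords_def by blast
  have a: "a = rootcomb l" "a' = rootcomb l'" using g g' unfolding root_coords_def by auto
  have "(\<Sum>k\<in>UNIV. (rcoords l k - C * rcoords l' k) *\<^sub>R rv (rt k)) = rv a - C *\<^sub>R rv a'"
    by (simp add: a rv_rootcomb scaleR_diff_left sum_subtractf scaleR_sum_right)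
  also have "\<dots> = 0" using eq by simp
  finally have "(\<lambda>k. rcoords l k - C * rcoords l' k) = (\<lambda>_. 0)" by (rule simple_roots_independent)
  then have lC: "rcoords l = (\<lambda>k. C * rcoords l' k)" by (auto simp: fun_eq_iff)
  define nu where "nu = wact (rev ws) l"
  have "rcoords nu = wact_real (rev ws) (rcoords l)" by (simp add: nu_def rcoords_wact)
  also have "\<dots> = (\<lambda>k. C * wact_real (rev ws) (rcoords l') k)" by (simp add: lC wact_real_smult)
  also have "wact_real (rev ws) (rcoords l') = rcoords (delta j)" by (simp add: lw rcoords_wact[symmetric] wact_rev_wact)
  finally have nu: "rcoords nu = (\<lambda>k. C * rcoords (delta j) k)" .
  obtain c'' where "(rootcomb nu, c'') \<in> RP" using rootpair_wact[of l c "rev ws"] h a nu_def by auto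
  then obtain l'' m'' where g'': "root_coords (rootcomb nu) c'' l'' m''" using rootpair_coords by blast
  then have "l'' = nu" using rootcomb_inj unfolding root_coords_def by metis
  then have F: "symnorm nu * of_int (m'' j) = 2 * d j * of_int (nu j)" using g'' unfolding root_coords_def by blast
  have nuj: "of_int (nu j) = C" using nu by (auto simp: fun_eq_iff rcoords_def delta_def dest: spec[of _ j])
  have "rcoords (delta j) = delta_real j" by (auto simp: rcoords_def delta_def delta_real_def fun_eq_iff)
  then have "symnorm nu = C * C * symform (delta_real j) (delta_real j)" by (simp add: symnorm_def nu symform_scale)
  also have "symform (delta_real j) (delta_real j) = 2 * d j" by (simp add: symform_delta_real sum_mult_delta_real cartan_diag)
  finally have "C * C * (2 * d j) * of_int (m'' j) = 2 * d j * C" using F nuj by simp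
  then have "C * of_int (m'' j) = 1" using C dpos[of j] by (simp add: algebra_simps)
  then have "of_int (nu j * m'' j) = (1::real)" using nuj by simp
  then have "nu j * m'' j = 1" by linarith
  moreover have "nu j > 0" using nuj C by simp
  ultimately have "nu j = 1" using pos_zmult_eq_1_iff by blast
  then have C1: "C = 1" using nuj by simp
  then have "rv a = rv a'" using eq by simp
  then show ?thesis using rv_inj C1 by blast
qed

abbreviation ctheta where "ctheta \<equiv> coroot cor rt theta"

lemma theta_root: "theta \<in> roots cor rt" using highest by (simp add: tw_highest_def)

lemma theta_rootpair: "(theta, ctheta) \<in> RP" using roots_rootpair[OF theta_root] .

definition theta_coeffs :: "'i \<Rightarrow> int" where "theta_coeffs = (SOME l. theta = rootcomb l)"

lemma theta_rootcomb: "theta = rootcomb theta_coeffs"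
proof -
  obtain l m where "root_coords theta ctheta l m" using rootpair_coords[OF theta_rootpair] by blast
  then have "\<exists>l. theta = rootcomb l" unfolding root_coords_def by blast
  then show ?thesis unfolding theta_coeffs_def by (rule someI_ex)
qed

lemma highest_root_bound:
  assumes h: "(a,c) \<in> RP" and al: "a = rootcomb l"
  shows "rcoords l i / real (nQ Q n c) \<le> rcoords theta_coeffs i / real (nQ Q n ctheta)"
proof -
  have "a \<in> roots cor rt" using h by (force simp: roots_def)
  then obtain m :: "'i \<Rightarrow> nat" where m: "tw_root cor rt Q n theta - tw_root cor rt Q n a =
      (\<Sum>i\<in>UNIV. real (m i) *\<^sub>R tw_sroot cor rt Q n i)"
    using highest by (auto simp: tw_highest_def)
  define Nt where "Nt = real (nQ Q n ctheta)"
  define Nc where "Nc = real (nQ Q n c)"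
  define Ni where "Ni = (\<lambda>i. real (nQ Q n (cor i)))"
  have ca: "coroot cor rt a = c" using coroot_eq[OF h] .
  have rth: "rv theta = (\<Sum>k\<in>UNIV. rcoords theta_coeffs k *\<^sub>R rv (rt k))" by (subst theta_rootcomb) (rule rv_rootcomb)
  have ra: "rv a = (\<Sum>k\<in>UNIV. rcoords l k *\<^sub>R rv (rt k))" by (subst al) (rule rv_rootcomb)
  have t1: "tw_root cor rt Q n theta = (\<Sum>k\<in>UNIV. (rcoords theta_coeffs k / Nt) *\<^sub>R rv (rt k))"
    unfolding tw_root_def Nt_def rth
    by (simp add: scaleR_sum_right divide_inverse mult.commute)
  have t2: "tw_root cor rt Q n a = (\<Sum>k\<in>UNIV. (rcoords l k / Nc) *\<^sub>R rv (rt k))"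
    unfolding tw_root_def Nc_def ca ra
    by (simp add: scaleR_sum_right divide_inverse mult.commute)
  have t3: "(\<Sum>i\<in>UNIV. real (m i) *\<^sub>R tw_sroot cor rt Q n i) = (\<Sum>k\<in>UNIV. (real (m k) / Ni k) *\<^sub>R rv (rt k))"
    unfolding tw_sroot_def Ni_def by (simp add: divide_inverse mult.commute)
  have "(\<Sum>k\<in>UNIV. (rcoords theta_coeffs k / Nt - rcoords l k / Nc - real (m k) / Ni k) *\<^sub>R rv (rt k)) =
        tw_root cor rt Q n theta - tw_root cor rt Q n a - (\<Sum>i\<in>UNIV. real (m i) *\<^sub>R tw_sroot cor rt Q n i)"
    unfolding t1 t2 t3 by (simp add: scaleR_diff_left sum_subtractf)
  also have "\<dots> = 0" using m by simp
  finally have "(\<lambda>k. rcoords theta_coeffs k / Nt - rcoords l k / Nc - real (m k) / Ni k) = (\<lambda>_. 0)" by (rule simple_roots_independent)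
  then have "rcoords theta_coeffs i / Nt - rcoords l i / Nc = real (m i) / Ni i" by (auto simp: fun_eq_iff dest: spec[of _ i])
  moreover have "real (m i) / Ni i \<ge> 0" by (simp add: Ni_def)
  ultimately show ?thesis using Nt_def Nc_def by simp
qed

lemma theta_coeffs_pos: "theta_coeffs i > 0"
proof -
  have "rcoords (delta i) i / real (nQ Q n (cor i)) \<le> rcoords theta_coeffs i / real (nQ Q n ctheta)"
    by (rule highest_root_bound[OF rootpairs.simple rootcomb_delta[symmetric]])
  moreover have "rcoords (delta i) i = 1" by (simp add: rcoords_def delta_def)
  moreover have "0 < 1 / real (nQ Q n (cor i))" using nQ_pos[OF n_gt0, of Q "cor i"] by simp
  ultimately have "0 < rcoords theta_coeffs i / real (nQ Q n ctheta)" by (metis order_less_le_trans)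
  then show ?thesis using nQ_pos[OF n_gt0, of Q ctheta] by (simp add: rcoords_def zero_less_divide_iff)
qed

section \<open>Affine roots and the affine Weyl group\<close>

abbreviation rho where "rho \<equiv> rhoc cor rt"
definition nR :: "int^'n \<Rightarrow> real" where "nR c = real (nQ Q n c)"

text \<open>An affine root \<open>(a, c, k)\<close>, with \<open>(a, c)\<close> a root pair, stands for the affine function
  \<open>x \<mapsto> \<langle>x + \<rho>, a\<rangle> - k n(c)\<close>; this is \<open>n(c)\<close> times the twisted affine root \<open>(a / n(c), k)\<close>
  evaluated at \<open>x + \<rho>\<close>, so its reflection is the dot action of \<open>\<sigma>\<^bsub>a/n(c), k\<^esub>\<close>.\<close>

definition affval :: "'n affroot \<Rightarrow> real^'n \<Rightarrow> real" where
  "affval p x = (case p of (a,c,k) \<Rightarrow> (x + rho) \<bullet> rv a - of_int k * nR c)"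
definition affrefl :: "'n affroot \<Rightarrow> real^'n \<Rightarrow> real^'n" where
  "affrefl p x = (case p of (a,c,k) \<Rightarrow> x - affval p x *\<^sub>R rv c)"
definition affroots :: "'n affroot set" where
  "affroots = {(a,c,k). (a,c) \<in> RP}"
text \<open>The image of \<open>p'\<close> under the reflection in \<open>p\<close>; the level stays integral by \<open>nQ_dvd_pairing\<close>.\<close>

definition affconj :: "'n affroot \<Rightarrow> 'n affroot \<Rightarrow> 'n affroot" where
  "affconj p p' = (case p of (a,c,k) \<Rightarrow> case p' of (a',c',k') \<Rightarrow>
     (reflX_by a c a', reflY_by a c c', k' - (k * ipair c a' * int (nQ Q n c)) div int (nQ Q n c')))"

lemma affval_simp: "affval (a,c,k) x = (x + rho) \<bullet> rv a - of_int k * nR c" by (simp add: affval_def)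
lemma affrefl_simp: "affrefl (a,c,k) x = x - affval (a,c,k) x *\<^sub>R rv c" by (simp add: affrefl_def)
lemma affroots_iff[simp]: "(a,c,k) \<in> affroots \<longleftrightarrow> (a,c) \<in> RP" by (simp add: affroots_def)
lemma affconj_simp: "affconj (a,c,k) (a',c',k') =
     (reflX_by a c a', reflY_by a c c', k' - (k * ipair c a' * int (nQ Q n c)) div int (nQ Q n c'))"
  by (simp add: affconj_def)

lemma nR_pos: "nR c > 0" using nQ_pos[OF n_gt0] by (simp add: nR_def)

lemma affval_shift: "affval (a,c,k) (x - s *\<^sub>R v) = affval (a,c,k) x - s * (v \<bullet> rv a)"
  by (simp add: affval_simp inner_diff_left algebra_simps)

lemma rootpair_pairing_real: "(a,c) \<in> RP \<Longrightarrow> rv c \<bullet> rv a = 2"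
  using rootpair_pairing ipair_rv by (metis of_int_numeral)

lemma affval_affrefl: "(a,c) \<in> RP \<Longrightarrow> affval (a,c,k) (affrefl (a,c,k) x) = - affval (a,c,k) x"
  unfolding affrefl_simp by (subst affval_shift) (simp add: rootpair_pairing_real)

lemma affrefl_affrefl: "(a,c) \<in> RP \<Longrightarrow> affrefl (a,c,k) (affrefl (a,c,k) x) = x"
proof -
  assume h: "(a,c) \<in> RP"
  have "affrefl (a,c,k) (affrefl (a,c,k) x) = affrefl (a,c,k) x - affval (a,c,k) (affrefl (a,c,k) x) *\<^sub>R rv c"
    by (rule affrefl_simp)
  also have "\<dots> = x" unfolding affval_affrefl[OF h] by (simp add: affrefl_simp)
  finally show ?thesis .
qed

lemma affconj_in_affroots: "p \<in> affroots \<Longrightarrow> p' \<in> affroots \<Longrightarrow> affconj p p' \<in> affroots"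
  by (cases p; cases p') (auto simp: affconj_simp rootpairs_reflect)

lemma rv_reflX_by: "rv (reflX_by a c a') = rv a' - of_int (ipair c a') *\<^sub>R rv a"
  by (simp add: reflX_by_def rv_diff rv_smult)
lemma rv_reflY_by: "rv (reflY_by a c c') = rv c' - of_int (ipair c' a) *\<^sub>R rv c"
  by (simp add: reflY_by_def rv_diff rv_smult)

lemma affval_affconj_pair:
  assumes h: "(a,c) \<in> RP" and h': "(a',c') \<in> RP"
  shows "affval (affconj (a,c,k) (a',c',k')) x = affval (a',c',k') (affrefl (a,c,k) x)"
proof -
  define D where "D = k * ipair c a' * int (nQ Q n c)"
  have dv: "int (nQ Q n c') dvd D" unfolding D_def using nQ_dvd_pairing[OF h h']
    by (metis dvd_mult mult.assoc)
  have DD: "(D div int (nQ Q n c')) * int (nQ Q n c') = D" using dv by simp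
  have N': "nR (reflY_by a c c') = nR c'" by (simp add: nR_def nQ_reflY_by[OF h])
  have "of_int (k' - D div int (nQ Q n c')) * nR c' = of_int k' * nR c' - of_int D"
  proof -
    have "of_int (D div int (nQ Q n c')) * nR c' = real_of_int ((D div int (nQ Q n c')) * int (nQ Q n c'))"
      by (simp add: nR_def)
    also have "\<dots> = of_int D" using DD by simp
    finally show ?thesis by (simp add: algebra_simps)
  qed
  then have "affval (affconj (a,c,k) (a',c',k')) x = (x + rho) \<bullet> rv (reflX_by a c a') - (of_int k' * nR c' - of_int D)"
    by (simp add: affconj_simp N' D_def affval_simp)
  also have "\<dots> = affval (a',c',k') (affrefl (a,c,k) x)"
    by (simp add: affval_simp affrefl_simp rv_reflX_by inner_diff_left inner_diff_right D_def nR_def ipair_rv algebra_simps)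
  finally show ?thesis .
qed

lemma affrefl_affconj_pair:
  assumes h: "(a,c) \<in> RP" and h': "(a',c') \<in> RP"
  shows "affrefl (affconj (a,c,k) (a',c',k')) = affrefl (a,c,k) \<circ> affrefl (a',c',k') \<circ> affrefl (a,c,k)"
proof
  fix x
  define w where "w = affrefl (a,c,k) x"
  define s where "s = affval (a',c',k') w"
  have "(affrefl (a,c,k) \<circ> affrefl (a',c',k') \<circ> affrefl (a,c,k)) x = affrefl (a,c,k) (w - s *\<^sub>R rv c')"
    by (simp add: w_def s_def affrefl_simp)
  also have "\<dots> = (w - s *\<^sub>R rv c') - (affval (a,c,k) w - s * (rv c' \<bullet> rv a)) *\<^sub>R rv c"
    by (simp add: affrefl_simp affval_shift)
  also have "\<dots> = affrefl (a,c,k) w - s *\<^sub>R (rv c' - (rv c' \<bullet> rv a) *\<^sub>R rv c)"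
    by (simp add: affrefl_simp algebra_simps)
  also have "affrefl (a,c,k) w = x" using affrefl_affrefl[OF h] w_def by simp
  finally have R: "(affrefl (a,c,k) \<circ> affrefl (a',c',k') \<circ> affrefl (a,c,k)) x = x - s *\<^sub>R (rv c' - (rv c' \<bullet> rv a) *\<^sub>R rv c)" .
  have "affrefl (affconj (a,c,k) (a',c',k')) x = x - affval (affconj (a,c,k) (a',c',k')) x *\<^sub>R rv (reflY_by a c c')"
    by (simp add: affconj_simp affrefl_simp)
  also have "\<dots> = x - s *\<^sub>R (rv c' - (rv c' \<bullet> rv a) *\<^sub>R rv c)"
    using affval_affconj_pair[OF h h'] by (simp add: s_def w_def rv_reflY_by ipair_rv)
  finally show "affrefl (affconj (a,c,k) (a',c',k')) x = (affrefl (a,c,k) \<circ> affrefl (a',c',k') \<circ> affrefl (a,c,k)) x"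
    using R by simp
qed

definition simple_affroot :: "'i option \<Rightarrow> 'n affroot" where
  "simple_affroot j = (case j of Some i \<Rightarrow> (rt i, cor i, 0) | None \<Rightarrow> (- theta, - ctheta, -1))"

lemma simple_affroot_in: "simple_affroot j \<in> affroots"
  by (cases j) (auto simp: simple_affroot_def rootpairs.simple rootpairs_neg theta_rootpair)

abbreviation G where "G \<equiv> gen cor rt Q n theta"

lemma gen_eq_affrefl: "G j = affrefl (simple_affroot j)"
proof (rule ext)
  fix x
  show "G j x = affrefl (simple_affroot j) x"
  proof (cases j)
    case (Some i)
    define N where "N = real (nQ Q n (cor i))"
    have N: "N \<noteq> 0" using nQ_pos[OF n_gt0, of Q "cor i"] by (simp add: N_def)
    have "G j x = x - ((x + rho) \<bullet> ((1 / N) *\<^sub>R rv (rt i))) *\<^sub>R rv (int (nQ Q n (cor i)) *s cor i)"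
      by (simp add: Some gen_def aff_refl_def tw_sroot_def tw_scoroot_def tw_scor_def N_def)
    also have "\<dots> = x - (((x + rho) \<bullet> rv (rt i)) / N) *\<^sub>R (N *\<^sub>R rv (cor i))"
      by (simp only: rv_smult inner_scaleR_right N_def of_int_of_nat_eq) (simp add: divide_inverse mult.commute)
    also have "\<dots> = x - ((x + rho) \<bullet> rv (rt i)) *\<^sub>R rv (cor i)" using N by simp
    also have "\<dots> = affrefl (simple_affroot j) x" by (simp add: Some simple_affroot_def affrefl_simp affval_simp)
    finally show ?thesis .
  next
    case None
    define N where "N = real (nQ Q n ctheta)"
    have N: "N \<noteq> 0" using nQ_pos[OF n_gt0, of Q ctheta] by (simp add: N_def)
    have N2: "nR (- ctheta) = N" by (simp add: nR_def nQ_uminus[OF quad] N_def)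
    have "G j x = x - ((x + rho) \<bullet> ((1 / N) *\<^sub>R rv theta) - 1) *\<^sub>R (N *\<^sub>R rv ctheta)"
      by (simp add: None gen_def aff_refl_def tw_root_def tw_coroot_def N_def)
    also have "\<dots> = x - ((x + rho) \<bullet> rv theta - N) *\<^sub>R rv ctheta"
      using N by (simp add: inner_scaleR_right algebra_simps)
    also have "\<dots> = affrefl (simple_affroot j) x"
      by (simp add: None simple_affroot_def affrefl_simp affval_simp N2 rv_uminus) (simp add: algebra_simps)
    finally show ?thesis .
  qed
qed

abbreviation W where "W \<equiv> word_map cor rt Q n theta"

lemma W_Nil[simp]: "W [] = id" by (simp add: word_map_def)
lemma W_Cons: "W (j # ws) = W ws \<circ> G j" by (simp add: word_map_def)
lemma W_append: "W (xs @ ys) = W ys \<circ> W xs" by (simp add: word_map_def)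
lemma W_single: "W [j] = G j" by (simp add: word_map_def)

lemma G_invol: "G j (G j x) = x"
proof -
  obtain a c k where s: "simple_affroot j = (a,c,k)" by (cases "simple_affroot j") auto
  have "(a,c) \<in> RP" using simple_affroot_in[of j] s by simp
  then show ?thesis using affrefl_affrefl gen_eq_affrefl s by simp
qed

lemma W_rev_inv: "W (rev ws) \<circ> W ws = id"
proof (induction ws)
  case Nil then show ?case by simp
next
  case (Cons j ws)
  have "W (rev (j # ws)) \<circ> W (j # ws) = G j \<circ> (W (rev ws) \<circ> W ws) \<circ> G j"
    by (simp add: W_append W_Cons W_single comp_assoc)
  then show ?case using Cons by (simp add: fun_eq_iff G_invol)
qed

lemma W_inv_rev: "W ws \<circ> W (rev ws) = id"
  using W_rev_inv[of "rev ws"] by simp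

lemma W_rev_app: "W (rev ws) (W ws x) = x"
  using W_rev_inv[of ws] by (simp add: fun_eq_iff)
lemma W_app_rev: "W ws (W (rev ws) x) = x"
  using W_inv_rev[of ws] by (simp add: fun_eq_iff)

fun transport :: "'n affroot \<Rightarrow> 'i option list \<Rightarrow> 'n affroot" where
  "transport p [] = p" | "transport p (j # ws) = affconj (simple_affroot j) (transport p ws)"

lemma transport_in_affroots: "p \<in> affroots \<Longrightarrow> transport p ws \<in> affroots"
  by (induction ws) (auto intro: affconj_in_affroots simple_affroot_in)

lemma affval_affconj: "p \<in> affroots \<Longrightarrow> p' \<in> affroots \<Longrightarrow> affval (affconj p p') x = affval p' (affrefl p x)"
  by (cases p; cases p') (simp add: affval_affconj_pair)

lemma affrefl_affconj: "p \<in> affroots \<Longrightarrow> p' \<in> affroots \<Longrightarrow> affrefl (affconj p p') = affrefl p \<circ> affrefl p' \<circ> affrefl p"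
  by (cases p; cases p') (simp add: affrefl_affconj_pair)

lemma affval_transport: "p \<in> affroots \<Longrightarrow> affval (transport p ws) = affval p \<circ> W ws"
proof (induction ws)
  case Nil then show ?case by simp
next
  case (Cons j ws)
  show ?case
  proof
    fix x
    have "affval (transport p (j # ws)) x = affval (transport p ws) (affrefl (simple_affroot j) x)"
      using affval_affconj[OF simple_affroot_in transport_in_affroots[OF Cons.prems]] by simp
    also have "\<dots> = affval p (W (j # ws) x)" using Cons by (simp add: W_Cons gen_eq_affrefl)
    finally show "affval (transport p (j # ws)) x = (affval p \<circ> W (j # ws)) x" by simp
  qed
qed

lemma affrefl_transport: "p \<in> affroots \<Longrightarrow> affrefl (transport p ws) = W (rev ws) \<circ> affrefl p \<circ> W ws"
proof (induction ws)
  case Nil then show ?case by simp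
next
  case (Cons j ws)
  have "affrefl (transport p (j # ws)) = affrefl (simple_affroot j) \<circ> affrefl (transport p ws) \<circ> affrefl (simple_affroot j)"
    using affrefl_affconj[OF simple_affroot_in transport_in_affroots[OF Cons.prems]] by simp
  also have "\<dots> = W (rev (j # ws)) \<circ> affrefl p \<circ> W (j # ws)"
    using Cons by (simp add: W_append W_Cons W_single gen_eq_affrefl fun_eq_iff)
  finally show ?case .
qed

section \<open>Every affine root is positive or negative\<close>

definition alpha :: "'i option \<Rightarrow> real^'n \<Rightarrow> real" where "alpha j = affval (simple_affroot j)"
definition affcomb :: "('i option \<Rightarrow> real) \<Rightarrow> real^'n \<Rightarrow> real" where
  "affcomb m x = (\<Sum>l\<in>UNIV. m l * alpha l x)"
definition nonneg_comb :: "(real^'n \<Rightarrow> real) \<Rightarrow> bool" where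
  "nonneg_comb f \<longleftrightarrow> (\<exists>m. (\<forall>l. m l \<ge> 0) \<and> f = affcomb m)"
definition nonpos_comb :: "(real^'n \<Rightarrow> real) \<Rightarrow> bool" where
  "nonpos_comb f \<longleftrightarrow> nonneg_comb (\<lambda>x. - f x)"

lemma nonneg_combI: "(\<And>j. 0 \<le> m j) \<Longrightarrow> f = affcomb m \<Longrightarrow> nonneg_comb f"
  unfolding nonneg_comb_def by blast

lemma sum_option: "(\<Sum>l\<in>UNIV. (f :: 'i option \<Rightarrow> real) l) = f None + (\<Sum>i\<in>UNIV. f (Some i))"
  by (simp add: UNIV_option_conv sum.reindex)

lemma alpha_Some: "alpha (Some i) x = (x + rho) \<bullet> rv (rt i)"
  by (simp add: alpha_def simple_affroot_def affval_simp)
lemma alpha_None: "alpha None x = nR ctheta - (x + rho) \<bullet> rv theta"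
  by (simp add: alpha_def simple_affroot_def affval_simp nR_def nQ_uminus[OF quad] rv_uminus)

lemma inner_rootcomb: "(x + rho) \<bullet> rv (rootcomb l) = (\<Sum>i\<in>UNIV. rcoords l i * alpha (Some i) x)"
  by (simp add: rv_rootcomb inner_sum_right alpha_Some)

lemma theta_inner: "(x + rho) \<bullet> rv theta = (\<Sum>i\<in>UNIV. rcoords theta_coeffs i * alpha (Some i) x)"
  by (subst theta_rootcomb) (rule inner_rootcomb)

lemma affcomb_expand: "affcomb m x = m None * alpha None x + (\<Sum>i\<in>UNIV. m (Some i) * alpha (Some i) x)"
  by (simp add: affcomb_def sum_option)

lemma affcomb_add: "affcomb (\<lambda>l. m l + m' l) x = affcomb m x + affcomb m' x"
  by (simp add: affcomb_def algebra_simps sum.distrib)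
lemma affcomb_uminus: "affcomb (\<lambda>l. - m l) x = - affcomb m x"
  by (simp add: affcomb_def sum_negf)
lemma affcomb_upd: "affcomb (m(t := v)) x = affcomb m x + (v - m t) * alpha t x"
proof -
  have "affcomb (m(t := v)) x = (\<Sum>l\<in>UNIV. m l * alpha l x + (if l = t then (v - m t) * alpha t x else 0))"
    unfolding affcomb_def by (rule sum.cong) (auto simp: algebra_simps)
  then show ?thesis by (simp add: sum.distrib affcomb_def)
qed
lemma affcomb_single: "(\<forall>l. l \<noteq> t \<longrightarrow> m l = 0) \<Longrightarrow> affcomb m x = m t * alpha t x"
proof -
  assume h: "\<forall>l. l \<noteq> t \<longrightarrow> m l = 0"
  have "affcomb m x = (\<Sum>l\<in>UNIV. if l = t then m t * alpha t x else 0)"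
    unfolding affcomb_def by (rule sum.cong) (use h in auto)
  then show ?thesis by simp
qed

lemma nonneg_comb_alpha: "nonneg_comb (alpha j)"
  by (rule nonneg_combI[of "\<lambda>l. if l = j then 1 else 0"]) (auto intro!: ext simp: affcomb_single)

lemma affcomb_zero_coeffs:
  assumes z: "\<And>x. affcomb m x = 0"
  shows "m l = 0"
proof -
  have "affcomb m (- rho) = m None * nR ctheta" by (simp add: affcomb_expand alpha_Some alpha_None)
  then have mN: "m None = 0" using z[of "- rho"] nR_pos[of ctheta] by simp
  define V where "V = (\<Sum>i\<in>UNIV. m (Some i) *\<^sub>R rv (rt i))"
  have cV: "affcomb m x = (x + rho) \<bullet> V" for x
    by (simp add: affcomb_expand mN alpha_Some V_def inner_sum_right)
  have "V \<bullet> V = 0" using cV[of "V - rho"] z[of "V - rho"] by simp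
  then have "V = 0" by simp
  then have "(\<lambda>i. m (Some i)) = (\<lambda>_. 0)" by (intro simple_roots_independent) (simp add: V_def)
  then show ?thesis using mN by (cases l) (auto simp: fun_eq_iff)
qed

lemma affcomb_inj:
  assumes "\<And>x. affcomb m x = affcomb m' x"
  shows "m = m'"
proof
  fix l
  have "affcomb (\<lambda>l. m l - m' l) x = 0" for x
    using assms[of x] by (simp add: affcomb_def sum_subtractf left_diff_distrib)
  then have "m l - m' l = 0" by (rule affcomb_zero_coeffs)
  then show "m l = m' l" by simp
qed

lemma affval_nonzero:
  assumes "p \<in> affroots"
  shows "\<exists>x. affval p x \<noteq> 0"
proof -
  obtain a c k where p: "p = (a, c, k)" and h: "(a, c) \<in> RP" using assms by (cases p) auto
  have "affval p (rv c - rho) - affval p (- rho) = 2"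
    using rootpair_pairing_real[OF h] by (simp add: p affval_simp inner_commute)
  then have "affval p (rv c - rho) \<noteq> 0 \<or> affval p (- rho) \<noteq> 0" by auto
  then show ?thesis by blast
qed

lemma nonneg_nonpos_comb_zero: "nonneg_comb f \<Longrightarrow> nonpos_comb f \<Longrightarrow> f x = 0"
proof -
  assume "nonneg_comb f" "nonpos_comb f"
  then obtain m m' where m: "\<forall>l. m l \<ge> 0" "f = affcomb m" and m': "\<forall>l. m' l \<ge> 0" "(\<lambda>x. - f x) = affcomb m'"
    unfolding nonneg_comb_def nonpos_comb_def by blast
  have "affcomb (\<lambda>l. m l + m' l) y = 0" for y
  proof -
    have c1: "affcomb m y = f y" using m(2) by simp
    have c2: "affcomb m' y = - f y" using fun_cong[OF m'(2), of y] by simp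
    show ?thesis by (simp add: affcomb_add c1 c2)
  qed
  then have "\<And>l. m l + m' l = 0" by (rule affcomb_zero_coeffs)
  then have "\<And>l. m l = 0" using m(1) m'(1) by (meson add_nonneg_eq_0_iff)
  then show "f x = 0" using m(2) by (simp add: affcomb_def)
qed

lemma affroot_not_nonneg_nonpos: "p \<in> affroots \<Longrightarrow> nonneg_comb (affval p) \<Longrightarrow> nonpos_comb (affval p) \<Longrightarrow> False"
  using affval_nonzero nonneg_nonpos_comb_zero by metis

lemma nonpos_combI: "(\<And>j. m j \<le> 0) \<Longrightarrow> f = affcomb m \<Longrightarrow> nonpos_comb f"
  unfolding nonpos_comb_def nonneg_comb_def by (intro exI[of _ "\<lambda>j. - m j"]) (simp add: affcomb_uminus fun_eq_iff)

lemma nonpos_comb_uminus_iff: "nonpos_comb (\<lambda>x. - f x) \<longleftrightarrow> nonneg_comb f"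
  by (simp add: nonpos_comb_def)

lemma affval_uminus: "affval (- a, - c, - k) x = - affval (a, c, k) x"
  by (simp add: affval_simp nR_def nQ_uminus[OF quad] rv_uminus)

text \<open>The constant function \<open>1\<close> is \<open>(\<alpha>\<^sub>0 + \<Sum>i. t\<^sub>i \<alpha>\<^sub>i) / n(\<theta>)\<close>, \<open>t\<close> the coefficients of \<open>\<theta>\<close>.\<close>

lemma affval_eq_affcomb:
  fixes c :: "int^'n" and k :: int
  assumes a: "a = rootcomb l"
  defines "K \<equiv> of_int k * nR c / nR ctheta"
  shows "affval (a, c, k) = affcomb (\<lambda>j. case j of None \<Rightarrow> - K | Some i \<Rightarrow> rcoords l i - K * rcoords theta_coeffs i)"
proof
  fix x
  define S where "S = (\<Sum>i\<in>UNIV. rcoords theta_coeffs i * alpha (Some i) x)"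
  have "affcomb (\<lambda>j. case j of None \<Rightarrow> - K | Some i \<Rightarrow> rcoords l i - K * rcoords theta_coeffs i) x =
      - K * (nR ctheta - S) + ((\<Sum>i\<in>UNIV. rcoords l i * alpha (Some i) x) - K * S)"
    by (simp add: affcomb_expand alpha_None theta_inner S_def left_diff_distrib sum_subtractf
        sum_distrib_left mult.assoc)
  also have "\<dots> = affval (a, c, k) x"
    using nR_pos[of ctheta] by (simp add: affval_simp a inner_rootcomb K_def field_simps)
  finally show "affval (a, c, k) x = affcomb (\<lambda>j. case j of None \<Rightarrow> - K | Some i \<Rightarrow> rcoords l i - K * rcoords theta_coeffs i) x"
    by simp
qed

lemma affroot_nonneg_or_nonpos_of_nonneg_coeffs:
  assumes h: "(a, c) \<in> RP" and a: "a = rootcomb l" and l: "\<And>i. 0 \<le> l i"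
  shows "nonneg_comb (affval (a, c, k)) \<or> nonpos_comb (affval (a, c, k))"
proof -
  define K where "K = of_int k * nR c / nR ctheta"
  define m where "m j = (case j of None \<Rightarrow> - K | Some i \<Rightarrow> rcoords l i - K * rcoords theta_coeffs i)" for j
  have affval: "affval (a, c, k) = affcomb m"
    unfolding affval_eq_affcomb[OF a] m_def K_def ..
  define T where "T i = nR c * rcoords theta_coeffs i / nR ctheta" for i
  have T: "0 \<le> T i" "rcoords l i \<le> T i" "K * rcoords theta_coeffs i = of_int k * T i" for i
    using theta_coeffs_pos[of i] highest_root_bound[OF h a, of i] nR_pos[of c] nR_pos[of ctheta]
    by (auto simp: T_def K_def rcoords_def nR_def field_simps)
  show ?thesis
  proof (cases "k \<le> 0")
    case True
    have "0 \<le> m j" for j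
    proof (cases j)
      case (Some i)
      have "of_int k * T i \<le> 0" using True T(1)[of i] by (simp add: mult_nonpos_nonneg)
      then show ?thesis using Some T(3)[of i] l[of i] by (simp add: m_def rcoords_def)
    qed (use True nR_pos[of c] nR_pos[of ctheta] in \<open>simp add: m_def K_def divide_nonpos_pos mult_nonpos_nonneg\<close>)
    then show ?thesis using affval by (blast intro: nonneg_combI)
  next
    case False
    have "m j \<le> 0" for j
    proof (cases j)
      case (Some i)
      have "T i \<le> of_int k * T i" using False T(1)[of i] by (simp add: mult_le_cancel_right1)
      then show ?thesis using Some T(2,3)[of i] by (simp add: m_def)
    qed (use False nR_pos[of c] nR_pos[of ctheta] in \<open>simp add: m_def K_def\<close>)
    then show ?thesis using affval by (blast intro: nonpos_combI)
  qed
qed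

lemma affroot_nonneg_or_nonpos:
  assumes p: "p \<in> affroots"
  shows "nonneg_comb (affval p) \<or> nonpos_comb (affval p)"
proof -
  obtain a c k where p_eq: "p = (a, c, k)" and h: "(a, c) \<in> RP" using p by (cases p) auto
  obtain l where a: "a = rootcomb l" and signs: "(\<forall>i. 0 \<le> l i) \<or> (\<forall>i. l i \<le> 0)"
    using rootpair_sign_coherent[OF h] by blast
  from signs show ?thesis
  proof
    assume "\<forall>i. 0 \<le> l i"
    then show ?thesis using affroot_nonneg_or_nonpos_of_nonneg_coeffs[OF h a] p_eq by blast
  next
    assume "\<forall>i. l i \<le> 0"
    moreover have "- a = rootcomb (\<lambda>i. - l i)" using a by (simp add: rootcomb_def sum_negf vec_eq_iff)
    ultimately have "nonneg_comb (affval (- a, - c, - k)) \<or> nonpos_comb (affval (- a, - c, - k))"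
      using affroot_nonneg_or_nonpos_of_nonneg_coeffs[OF rootpairs_neg[OF h]] by simp
    moreover have "affval (- a, - c, - k) = (\<lambda>x. - affval p x)" by (rule ext) (simp add: p_eq affval_uminus)
    ultimately show ?thesis by (auto simp: nonpos_comb_uminus_iff nonpos_comb_def)
  qed
qed

section \<open>Length and the sign of affine roots\<close>

definition affcartan :: "'i option \<Rightarrow> 'i option \<Rightarrow> real" where
  "affcartan t l = rv (fst (snd (simple_affroot t))) \<bullet> rv (fst (simple_affroot l))"

lemma alpha_G: "alpha l (G t x) = alpha l x - alpha t x * affcartan t l"
proof -
  obtain at1 ct1 kt1 where st: "simple_affroot t = (at1,ct1,kt1)" by (cases "simple_affroot t") auto
  obtain al cl kl where sl: "simple_affroot l = (al,cl,kl)" by (cases "simple_affroot l") auto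
  have "alpha l (G t x) = affval (al,cl,kl) (x - alpha t x *\<^sub>R rv ct1)"
    by (simp add: gen_eq_affrefl alpha_def st sl affrefl_simp)
  also have "\<dots> = alpha l x - alpha t x * affcartan t l"
    by (simp add: affval_shift alpha_def sl affcartan_def st)
  finally show ?thesis .
qed

lemma affcomb_G: "affcomb m (G t x) = affcomb (m(t := m t - (\<Sum>l\<in>UNIV. m l * affcartan t l))) x"
proof -
  have "affcomb m (G t x) = (\<Sum>l\<in>UNIV. m l * alpha l x - alpha t x * (m l * affcartan t l))"
    unfolding affcomb_def by (rule sum.cong) (auto simp: alpha_G algebra_simps)
  also have "\<dots> = affcomb m x - alpha t x * (\<Sum>l\<in>UNIV. m l * affcartan t l)"
    by (simp add: sum_subtractf affcomb_def sum_distrib_left)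
  finally show ?thesis by (simp add: affcomb_upd algebra_simps)
qed

lemma alpha_nonzero: "\<exists>x. alpha j x \<noteq> 0" using affval_nonzero[OF simple_affroot_in] by (simp add: alpha_def)

lemma nonneg_flipped_proportional:
  assumes p: "p \<in> affroots" and ps: "nonneg_comb (affval p)" and ng: "nonpos_comb (\<lambda>x. affval p (G t x))"
  shows "\<exists>C>0. \<forall>x. affval p x = C * alpha t x"
proof -
  obtain m where m: "\<forall>l. m l \<ge> 0" "affval p = affcomb m" using ps unfolding nonneg_comb_def by blast
  obtain nn where nn: "\<forall>l. nn l \<ge> 0" "(\<lambda>x. - affval p (G t x)) = affcomb nn" using ng unfolding nonpos_comb_def nonneg_comb_def by blast
  define m' where "m' = m(t := m t - (\<Sum>l\<in>UNIV. m l * affcartan t l))"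
  have e1: "affval p (G t x) = affcomb m' x" for x using m(2) affcomb_G m'_def by simp
  have e2: "affcomb nn x = - affval p (G t x)" for x using fun_cong[OF nn(2), of x] by simp
  have "affcomb (\<lambda>l. m' l + nn l) x = 0" for x by (simp add: affcomb_add e1[symmetric] e2)
  then have z: "\<And>l. m' l + nn l = 0" by (rule affcomb_zero_coeffs)
  have mz: "\<forall>l. l \<noteq> t \<longrightarrow> m l = 0"
  proof (intro allI impI)
    fix l assume "l \<noteq> t"
    then have "m l + nn l = 0" using z[of l] by (simp add: m'_def)
    then show "m l = 0" using m(1) nn(1) by (meson add_nonneg_eq_0_iff)
  qed
  have ph: "affval p x = m t * alpha t x" for x using m(2) affcomb_single[OF mz] by simp
  have "m t \<noteq> 0"
  proof
    assume "m t = 0"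
    then have "\<forall>x. affval p x = 0" using ph by simp
    then show False using affval_nonzero[OF p] by blast
  qed
  then have "m t > 0" using m(1) by (simp add: order_less_le)
  then show ?thesis using ph by blast
qed

lemma affroot_proportional_eq:
  assumes p: "p \<in> affroots" and p': "p' \<in> affroots" and eq: "\<And>x. affval p x = C * affval p' x" and C: "C > 0"
  shows "p = p'"
proof -
  obtain a c k where pd: "p = (a,c,k)" by (cases p) auto
  obtain a' c' k' where pd': "p' = (a',c',k')" by (cases p') auto
  have h: "(a,c) \<in> RP" "(a',c') \<in> RP" using p p' pd pd' by auto
  have lin: "v \<bullet> rv a = C * (v \<bullet> rv a')" for v
  proof -
    have "affval p (v - rho) - affval p (- rho) = v \<bullet> rv a" by (simp add: pd affval_simp)
    moreover have "affval p' (v - rho) - affval p' (- rho) = v \<bullet> rv a'" by (simp add: pd' affval_simp)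
    ultimately show ?thesis using eq[of "v - rho"] eq[of "- rho"] by (simp add: algebra_simps)
  qed
  define u where "u = rv a - C *\<^sub>R rv a'"
  have "u \<bullet> u = 0" using lin[of u] by (simp add: u_def inner_diff_right)
  then have "rv a = C *\<^sub>R rv a'" by (simp add: u_def)
  then have aa: "a = a'" and C1: "C = 1" using rootpairs_reduced[OF h(1) h(2)] C by auto
  have cc: "c = c'" using rootpairs_coroot_unique h aa by blast
  have "affval p (- rho) = C * affval p' (- rho)" by (rule eq)
  then have "of_int k * nR c = of_int k' * nR c" using C1 cc by (simp add: pd pd' affval_simp)
  then have "k = k'" using nR_pos[of c] by simp
  then show ?thesis using pd pd' aa cc by simp
qed

lemma alpha_W_transport: "(\<lambda>x. alpha j (W ws x)) = affval (transport (simple_affroot j) ws)"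
  using affval_transport[OF simple_affroot_in, of j ws] by (simp add: alpha_def fun_eq_iff)

lemma alpha_W_nonneg_or_nonpos: "nonneg_comb (\<lambda>x. alpha j (W ws x)) \<or> nonpos_comb (\<lambda>x. alpha j (W ws x))"
  unfolding alpha_W_transport using affroot_nonneg_or_nonpos[OF transport_in_affroots[OF simple_affroot_in]] .

text \<open>If \<open>\<alpha>\<^sub>j\<close> is already negative along \<open>ws\<close> we use induction;
  otherwise the first letter \<open>t\<close> turns it negative, so the transported root is \<open>\<alpha>\<^sub>t\<close> and
  \<open>t\<close> can be deleted.\<close>

lemma nonpos_deletion:
  "nonpos_comb (\<lambda>x. alpha j (W ws x)) \<Longrightarrow>
     \<exists>ws'. length ws' + 1 = length ws \<and> set ws' \<subseteq> set ws \<and> W ws' = G j \<circ> W ws"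
proof (induction ws)
  case Nil
  then have "nonpos_comb (alpha j)" by simp
  then have "\<forall>x. alpha j x = 0" using nonneg_nonpos_comb_zero nonneg_comb_alpha by blast
  then show ?case using alpha_nonzero by blast
next
  case (Cons t ws)
  define p' where "p' = transport (simple_affroot j) ws"
  have p'AR: "p' \<in> affroots" by (simp add: p'_def transport_in_affroots simple_affroot_in)
  have ph: "affval p' = (\<lambda>x. alpha j (W ws x))" using alpha_W_transport p'_def by simp
  have WC: "W (t # ws) x = W ws (G t x)" for x by (simp add: W_Cons)
  from alpha_W_nonneg_or_nonpos[of j ws] show ?case
  proof
    assume ng: "nonpos_comb (\<lambda>x. alpha j (W ws x))"
    obtain ws'' where w'': "length ws'' + 1 = length ws" "set ws'' \<subseteq> set ws" "W ws'' = G j \<circ> W ws"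
      using Cons.IH[OF ng] by blast
    have "W (t # ws'') = G j \<circ> W (t # ws)" using w''(3) by (simp add: W_Cons comp_assoc)
    then show ?case using w'' by (intro exI[of _ "t # ws''"]) auto
  next
    assume ps: "nonneg_comb (\<lambda>x. alpha j (W ws x))"
    have ng: "nonpos_comb (\<lambda>x. affval p' (G t x))" using Cons.prems by (simp add: ph WC)
    obtain C where C: "C > 0" "\<forall>x. affval p' x = C * alpha t x" using nonneg_flipped_proportional[OF p'AR _ ng] ps ph by auto
    have "p' = simple_affroot t" using affroot_proportional_eq[OF p'AR simple_affroot_in] C by (simp add: alpha_def)
    then have "affrefl p' = G t" by (simp add: gen_eq_affrefl)
    moreover have "affrefl p' = W (rev ws) \<circ> G j \<circ> W ws" using affrefl_transport[OF simple_affroot_in] by (simp add: p'_def gen_eq_affrefl)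
    ultimately have e: "W (rev ws) (G j (W ws y)) = G t y" for y by (metis comp_apply)
    have "G j (W ws y) = W ws (G t y)" for y using e[of y] W_app_rev[of ws "G j (W ws y)"] by simp
    then have "G j (W (t # ws) x) = W ws x" for x by (simp add: WC G_invol)
    then have "W ws = G j \<circ> W (t # ws)" by (simp add: fun_eq_iff)
    then show ?case by (intro exI[of _ ws]) auto
  qed
qed

abbreviation L where "L \<equiv> Defs.len cor rt Q n theta"

text \<open>Elements act on the right, so \<open>G j \<circ> W ws\<close> is the product \<open>w s\<^sub>j\<close> and \<open>W ws \<circ> G j\<close> is \<open>s\<^sub>j w\<close>.\<close>

lemma L_le: "W ws = w \<Longrightarrow> L w \<le> length ws"
  unfolding Defs.len_def by (rule Least_le) auto

lemma L_ex: "\<exists>ws. length ws = L (W vs) \<and> W ws = W vs"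
  unfolding Defs.len_def by (rule LeastI_ex) auto

lemma L_mult_right_less: "nonpos_comb (\<lambda>x. alpha j (W ws x)) \<Longrightarrow> L (G j \<circ> W ws) < L (W ws)"
proof -
  assume ng: "nonpos_comb (\<lambda>x. alpha j (W ws x))"
  obtain ws0 where w0: "length ws0 = L (W ws)" "W ws0 = W ws" using L_ex by blast
  have "nonpos_comb (\<lambda>x. alpha j (W ws0 x))" using ng w0(2) by simp
  then obtain ws' where w': "length ws' + 1 = length ws0" "W ws' = G j \<circ> W ws0" using nonpos_deletion by blast
  have "L (G j \<circ> W ws) \<le> length ws'" using w'(2) w0(2) L_le by metis
  then show ?thesis using w' w0 by simp
qed

lemma alpha_self: "alpha j (G j x) = - alpha j x"
proof -
  obtain a c k where s: "simple_affroot j = (a,c,k)" by (cases "simple_affroot j") auto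
  have "(a,c) \<in> RP" using simple_affroot_in[of j] s by simp
  then show ?thesis using affval_affrefl by (simp add: alpha_def gen_eq_affrefl s)
qed

lemma L_mult_right_greater: "nonneg_comb (\<lambda>x. alpha j (W ws x)) \<Longrightarrow> L (W ws) < L (G j \<circ> W ws)"
proof -
  assume ps: "nonneg_comb (\<lambda>x. alpha j (W ws x))"
  have Wa: "W (ws @ [j]) = G j \<circ> W ws" by (simp add: W_append W_single)
  have "nonpos_comb (\<lambda>x. alpha j (W (ws @ [j]) x))" using ps unfolding nonpos_comb_def by (simp add: Wa alpha_self)
  then have "L (G j \<circ> W (ws @ [j])) < L (W (ws @ [j]))" by (rule L_mult_right_less)
  moreover have "G j \<circ> W (ws @ [j]) = W ws" by (simp add: Wa fun_eq_iff G_invol)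
  ultimately show ?thesis using Wa by simp
qed

lemma W_inv_eq: "W vs = W ws \<Longrightarrow> W (rev vs) = W (rev ws)"
proof -
  assume e: "W vs = W ws"
  have "W (rev vs) = W (rev vs) \<circ> (W ws \<circ> W (rev ws))" by (simp add: W_inv_rev)
  also have "\<dots> = (W (rev vs) \<circ> W vs) \<circ> W (rev ws)" by (simp add: e comp_assoc)
  also have "\<dots> = W (rev ws)" by (simp add: W_rev_inv)
  finally show ?thesis .
qed

lemma L_rev_le: "L (W (rev ws)) \<le> L (W ws)"
proof -
  obtain ws0 where w0: "length ws0 = L (W ws)" "W ws0 = W ws" using L_ex by blast
  have "W (rev ws0) = W (rev ws)" using W_inv_eq[OF w0(2)] .
  then have "L (W (rev ws)) \<le> length (rev ws0)" using L_le by metis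
  then show ?thesis using w0 by simp
qed

lemma L_rev: "L (W (rev ws)) = L (W ws)"
  using L_rev_le[of ws] L_rev_le[of "rev ws"] by simp

lemma L_mult_left_less: "nonpos_comb (\<lambda>x. alpha j (W (rev ws) x)) \<Longrightarrow> L (W ws \<circ> G j) < L (W ws)"
proof -
  assume ng: "nonpos_comb (\<lambda>x. alpha j (W (rev ws) x))"
  have "L (W ws \<circ> G j) = L (W (j # ws))" by (simp add: W_Cons)
  also have "\<dots> = L (W (rev (j # ws)))" by (rule L_rev[symmetric])
  also have "W (rev (j # ws)) = G j \<circ> W (rev ws)" by (simp add: W_append W_single)
  also have "L (G j \<circ> W (rev ws)) < L (W (rev ws))" using ng by (rule L_mult_right_less)
  also have "\<dots> = L (W ws)" by (rule L_rev)
  finally show ?thesis .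
qed

lemma L_mult_left_greater: "nonneg_comb (\<lambda>x. alpha j (W (rev ws) x)) \<Longrightarrow> L (W ws) < L (W ws \<circ> G j)"
proof -
  assume ps: "nonneg_comb (\<lambda>x. alpha j (W (rev ws) x))"
  have "L (W ws) = L (W (rev ws))" by (rule L_rev[symmetric])
  also have "\<dots> < L (G j \<circ> W (rev ws))" using ps by (rule L_mult_right_greater)
  also have "G j \<circ> W (rev ws) = W (rev (j # ws))" by (simp add: W_append W_single)
  also have "L (W (rev (j # ws))) = L (W (j # ws))" by (rule L_rev)
  also have "W (j # ws) = W ws \<circ> G j" by (simp add: W_Cons)
  finally show ?thesis .
qed

lemma bruhat_less_L: "bruhat_less cor rt Q n theta u w \<Longrightarrow> L u < L w"
  unfolding bruhat_less_def by (induction rule: trancl_induct) auto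


lemma alpha_parabolic_affcomb:
  assumes "set xs \<subseteq> J" "j \<in> J"
  shows "\<exists>m. (\<forall>l. l \<notin> J \<longrightarrow> m l = 0) \<and> (\<forall>x. alpha j (W xs x) = affcomb m x)"
  using assms(1)
proof (induction xs)
  case Nil
  have "\<forall>x. alpha j x = affcomb (\<lambda>l. if l = j then 1 else 0) x" by (subst affcomb_single) auto
  then show ?case using assms(2) by (intro exI[of _ "\<lambda>l. if l = j then 1 else 0"]) auto
next
  case (Cons t xs)
  then obtain m where m: "\<forall>l. l \<notin> J \<longrightarrow> m l = 0" "\<forall>x. alpha j (W xs x) = affcomb m x" by auto
  have tJ: "t \<in> J" using Cons.prems by simp
  define m' where "m' = m(t := m t - (\<Sum>l\<in>UNIV. m l * affcartan t l))"
  have "\<forall>x. alpha j (W (t # xs) x) = affcomb m' x" using m(2) by (simp add: W_Cons affcomb_G m'_def)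
  moreover have "\<forall>l. l \<notin> J \<longrightarrow> m' l = 0" using m(1) tJ by (simp add: m'_def)
  ultimately show ?case by blast
qed

lemma alpha_W_flipped_proportional:
  assumes "nonneg_comb (\<lambda>x. alpha j (W ws x))" and "nonpos_comb (\<lambda>x. alpha j (W ws (G t x)))"
  obtains C where "C > 0" "\<And>x. alpha j (W ws x) = C * alpha t x"
proof -
  have tr: "alpha j (W ws x) = affval (transport (simple_affroot j) ws) x" for x
    using alpha_W_transport[of j ws] by (simp add: fun_eq_iff)
  have "nonneg_comb (affval (transport (simple_affroot j) ws))"
    "nonpos_comb (\<lambda>x. affval (transport (simple_affroot j) ws) (G t x))"
    using assms by (simp_all add: tr)
  then obtain C where "C > 0" "\<forall>x. affval (transport (simple_affroot j) ws) x = C * alpha t x"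
    using nonneg_flipped_proportional[OF transport_in_affroots[OF simple_affroot_in]] by blast
  then show ?thesis using that by (simp add: tr)
qed

section \<open>Minimal coset representatives and the dot action\<close>

lemma parabolic_last_descent:
  assumes zs: "set zs \<subseteq> J" and nontrivial: "W zs \<noteq> id"
  obtains x zr where "x \<in> J" "set zr \<subseteq> J" "W zs = G x \<circ> W zr" "nonneg_comb (\<lambda>y. alpha x (W zr y))"
proof -
  obtain ys where ys: "set ys \<subseteq> J \<and> W ys = W zs"
    and ys_min: "\<And>ys'. set ys' \<subseteq> J \<and> W ys' = W zs \<Longrightarrow> length ys \<le> length ys'"
    using ex_has_least_nat[of "\<lambda>ys. set ys \<subseteq> J \<and> W ys = W zs" zs length] zs by blast
  then have "ys \<noteq> []" using nontrivial by auto
  then obtain zr x where ys_eq: "ys = zr @ [x]" by (cases ys rule: rev_cases) auto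
  have W_zs: "W zs = G x \<circ> W zr" using ys by (simp add: ys_eq W_append W_single)
  have "nonneg_comb (\<lambda>y. alpha x (W zr y))"
  proof (rule ccontr)
    assume "\<not> ?thesis"
    then have "nonpos_comb (\<lambda>y. alpha x (W zr y))" using alpha_W_nonneg_or_nonpos by blast
    then obtain zs' where "length zs' + 1 = length zr" "set zs' \<subseteq> set zr" "W zs' = G x \<circ> W zr"
      using nonpos_deletion by blast
    then show False using ys_min[of zs'] ys W_zs ys_eq by auto
  qed
  then show ?thesis using that ys ys_eq W_zs by auto
qed

lemma nonneg_comb_parabolic_compose:
  assumes zr: "set zr \<subseteq> J" and x: "x \<in> J" and nonneg: "nonneg_comb (\<lambda>y. alpha x (W zr y))"
    and nonneg_J: "\<And>k. k \<in> J \<Longrightarrow> nonneg_comb (\<lambda>y. alpha k (V y))"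
  shows "nonneg_comb (\<lambda>y. alpha x (W zr (V y)))"
proof -
  obtain mJ where mJ_J: "\<forall>l. l \<notin> J \<longrightarrow> mJ l = 0" and mJ: "\<forall>y. alpha x (W zr y) = affcomb mJ y"
    using alpha_parabolic_affcomb[OF zr x] by blast
  obtain m0 where m0: "\<forall>l. 0 \<le> m0 l" "(\<lambda>y. alpha x (W zr y)) = affcomb m0"
    using nonneg unfolding nonneg_comb_def by blast
  have "mJ = m0"
  proof (rule affcomb_inj)
    show "affcomb mJ y = affcomb m0 y" for y using mJ fun_cong[OF m0(2), of y] by simp
  qed
  have "\<forall>k\<in>J. \<exists>Mk. (\<forall>l. 0 \<le> Mk l) \<and> (\<lambda>y. alpha k (V y)) = affcomb Mk"
    using nonneg_J unfolding nonneg_comb_def by blast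
  then obtain M where M: "\<And>k. k \<in> J \<Longrightarrow> (\<forall>l. 0 \<le> M k l) \<and> (\<lambda>y. alpha k (V y)) = affcomb (M k)"
    by (metis bchoice)
  define MJ where "MJ l = (\<Sum>k\<in>UNIV. mJ k * M k l)" for l
  have summand: "mJ k * alpha k (V y) = mJ k * affcomb (M k) y" for k y
  proof (cases "k \<in> J")
    case True
    then show ?thesis using fun_cong[OF conjunct2[OF M[OF True]], of y] by simp
  qed (use mJ_J in simp)
  have "alpha x (W zr (V y)) = affcomb MJ y" for y
  proof -
    have "alpha x (W zr (V y)) = (\<Sum>k\<in>UNIV. mJ k * alpha k (V y))" by (simp add: mJ affcomb_def)
    also have "\<dots> = (\<Sum>k\<in>UNIV. mJ k * affcomb (M k) y)" by (simp only: summand)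
    also have "\<dots> = affcomb MJ y"
      unfolding affcomb_def MJ_def by (simp add: sum_distrib_left sum_distrib_right mult.assoc) (rule sum.swap)
    finally show ?thesis .
  qed
  moreover have "0 \<le> MJ l" for l
    unfolding MJ_def
  proof (rule sum_nonneg)
    show "0 \<le> mJ k * M k l" for k
      using M mJ_J m0(1) \<open>mJ = m0\<close> by (cases "k \<in> J") auto
  qed
  ultimately show ?thesis by (intro nonneg_combI[of MJ]) (simp_all add: fun_eq_iff)
qed

lemma transport_finite_root:
  "set ws \<subseteq> range Some \<Longrightarrow>
     \<exists>b c. transport (simple_affroot (Some i)) ws = (b, c, 0) \<and> (b, c) \<in> RP \<and> Q c = Q (cor i)"
proof (induction ws)
  case Nil
  then show ?case by (simp add: simple_affroot_def rootpairs.simple)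
next
  case (Cons t ws)
  then obtain j b c where t: "t = Some j" and bc: "transport (simple_affroot (Some i)) ws = (b, c, 0)"
    "(b, c) \<in> RP" "Q c = Q (cor i)"
    by auto
  have "(reflX_by (rt j) (cor j) b, reflY_by (rt j) (cor j) c) \<in> RP"
    by (rule rootpairs_reflect[OF rootpairs.simple bc(2)])
  moreover have "Q (reflY_by (rt j) (cor j) c) = Q (cor i)"
    using Q_reflY_by[OF rootpairs.simple] bc(3) by simp
  moreover have "transport (simple_affroot (Some i)) (t # ws) = affconj (simple_affroot (Some j)) (b, c, 0)"
    by (simp only: transport.simps t bc(1))
  ultimately show ?case by (simp add: simple_affroot_def affconj_simp)
qed

lemma nonpos_comb_level0: "b = rootcomb l \<Longrightarrow> (\<And>i. l i \<le> 0) \<Longrightarrow> nonpos_comb (affval (b, c, 0))"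
  using affval_eq_affcomb[where a = b and l = l and k = 0 and c = c]
  by (intro nonpos_combI[of "\<lambda>j. case j of None \<Rightarrow> 0 | Some i \<Rightarrow> real_of_int (l i)"])
     (auto simp: rcoords_def split: option.split)

lemma pos_root_if_nonneg_comb:
  assumes h: "(b, c) \<in> RP" and nonneg: "nonneg_comb (affval (b, c, 0))"
  shows "b \<in> pos_roots cor rt"
proof -
  obtain l where b: "b = rootcomb l" and signs: "(\<forall>i. 0 \<le> l i) \<or> (\<forall>i. l i \<le> 0)"
    using rootpair_sign_coherent[OF h] by blast
  have "\<forall>i. 0 \<le> l i"
  proof (rule ccontr)
    assume "\<not> ?thesis"
    then have "nonpos_comb (affval (b, c, 0))" using signs nonpos_comb_level0[OF b] by blast
    then show False using affroot_not_nonneg_nonpos[of "(b, c, 0)"] h nonneg by simp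
  qed
  moreover have "b \<in> roots cor rt" using h by (force simp: roots_def)
  ultimately show ?thesis
    unfolding pos_roots_def using b by (auto intro!: exI[of _ "\<lambda>k. nat (l k)"] simp: rootcomb_def)
qed

lemma alcove_bounds:
  assumes eta: "eta \<in> alcove_minus cor rt Q n" and h: "(b, c) \<in> RP"
  shows "nonneg_comb (affval (b, c, 0)) \<Longrightarrow> - nR c < affval (b, c, 0) eta \<and> affval (b, c, 0) eta \<le> 0"
    and "nonpos_comb (affval (b, c, 0)) \<Longrightarrow> 0 \<le> affval (b, c, 0) eta \<and> affval (b, c, 0) eta < nR c"
proof -
  assume "nonneg_comb (affval (b, c, 0))"
  then have "b \<in> pos_roots cor rt" by (rule pos_root_if_nonneg_comb[OF h])
  then have "- real (nQ Q n (coroot cor rt b)) < (eta + rho) \<bullet> rv b \<and> (eta + rho) \<bullet> rv b \<le> 0"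
    using eta unfolding alcove_minus_def by blast
  then show "- nR c < affval (b, c, 0) eta \<and> affval (b, c, 0) eta \<le> 0"
    using coroot_eq[OF h] by (simp add: affval_simp nR_def)
next
  assume "nonpos_comb (affval (b, c, 0))"
  moreover have "affval (- b, - c, 0) = (\<lambda>x. - affval (b, c, 0) x)"
    using affval_uminus[of b c 0] by (simp add: fun_eq_iff)
  ultimately have "nonneg_comb (affval (- b, - c, 0))" by (simp add: nonpos_comb_def)
  then have "- b \<in> pos_roots cor rt" by (rule pos_root_if_nonneg_comb[OF rootpairs_neg[OF h]])
  then have "- real (nQ Q n (coroot cor rt (- b))) < (eta + rho) \<bullet> rv (- b) \<and> (eta + rho) \<bullet> rv (- b) \<le> 0"
    using eta unfolding alcove_minus_def by blast
  then show "0 \<le> affval (b, c, 0) eta \<and> affval (b, c, 0) eta < nR c"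
    using coroot_eq[OF rootpairs_neg[OF h]] nQ_uminus[OF quad, of n c]
    by (simp add: affval_simp nR_def rv_uminus)
qed

lemma finite_weyl_alpha_bounds:
  assumes ws: "set ws \<subseteq> range Some" and eta: "eta \<in> alcove_minus cor rt Q n"
  shows "L (W ws) < L (W (ws @ [Some i])) \<Longrightarrow>
           - nR (cor i) < alpha (Some i) (W ws eta) \<and> alpha (Some i) (W ws eta) \<le> 0"
    and "L (W (ws @ [Some i])) < L (W ws) \<Longrightarrow>
           0 \<le> alpha (Some i) (W ws eta) \<and> alpha (Some i) (W ws eta) < nR (cor i)"
proof -
  obtain b c where bc: "transport (simple_affroot (Some i)) ws = (b, c, 0)" "(b, c) \<in> RP" "Q c = Q (cor i)"
    using transport_finite_root[OF ws] by blast
  have affval: "affval (b, c, 0) = (\<lambda>x. alpha (Some i) (W ws x))" using alpha_W_transport bc(1) by simp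
  have nR: "nR c = nR (cor i)" using nQ_cong[OF bc(3)] by (simp add: nR_def)
  have W_snoc: "W (ws @ [Some i]) = G (Some i) \<circ> W ws" by (simp add: W_append W_single)
  show "- nR (cor i) < alpha (Some i) (W ws eta) \<and> alpha (Some i) (W ws eta) \<le> 0"
    if "L (W ws) < L (W (ws @ [Some i]))"
  proof -
    have "\<not> nonpos_comb (affval (b, c, 0))" using L_mult_right_less[of "Some i" ws] that W_snoc affval by auto
    then have "nonneg_comb (affval (b, c, 0))"
      using alpha_W_nonneg_or_nonpos[of "Some i" ws] unfolding affval by blast
    then show ?thesis using alcove_bounds(1)[OF eta bc(2)] affval nR by simp
  qed
  show "0 \<le> alpha (Some i) (W ws eta) \<and> alpha (Some i) (W ws eta) < nR (cor i)"
    if "L (W (ws @ [Some i])) < L (W ws)"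
  proof -
    have "\<not> nonneg_comb (affval (b, c, 0))" using L_mult_right_greater[of "Some i" ws] that W_snoc affval by auto
    then have "nonpos_comb (affval (b, c, 0))"
      using alpha_W_nonneg_or_nonpos[of "Some i" ws] unfolding affval by blast
    then show ?thesis using alcove_bounds(2)[OF eta bc(2)] affval nR by simp
  qed
qed

lemma G_Some: "G (Some i) x = x - alpha (Some i) x *\<^sub>R rv (cor i)"
  by (simp add: gen_eq_affrefl alpha_def simple_affroot_def affrefl_simp)

context
  fixes eta :: "real^'n" and J :: "'i option set" and ws :: "'i option list"
  assumes stab: "parabolic cor rt Q n theta J = stabilizer cor rt Q n theta eta"
    and min_rep: "\<And>j. j \<in> J \<Longrightarrow> L (W ws) < L (W ws \<circ> G j)"
begin

lemma parabolic_fixes_eta: "set zs \<subseteq> J \<Longrightarrow> W zs eta = eta"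
  using stab unfolding parabolic_def stabilizer_def by blast

lemma min_rep_alpha_nonneg:
  assumes "k \<in> J"
  shows "nonneg_comb (\<lambda>x. alpha k (W (rev ws) x))"
proof -
  have "\<not> nonpos_comb (\<lambda>x. alpha k (W (rev ws) x))"
    using L_mult_left_less[of k ws] min_rep[OF assms] by (meson less_asym)
  then show ?thesis using alpha_W_nonneg_or_nonpos by blast
qed

lemma alpha_zero_if_not_min_rep:
  assumes j: "j \<in> J" and not_longer: "\<not> L (W (ws @ [Some i])) < L (W (ws @ [Some i]) \<circ> G j)"
  shows "alpha (Some i) (W ws eta) = 0"
proof -
  have "\<not> nonneg_comb (\<lambda>x. alpha j (W (rev (ws @ [Some i])) x))"
    using L_mult_left_greater not_longer by blast
  then have "nonpos_comb (\<lambda>x. alpha j (W (rev ws) (G (Some i) x)))"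
    using alpha_W_nonneg_or_nonpos[of j "rev (ws @ [Some i])"] by (simp add: W_Cons)
  then obtain C where "C > 0" and C: "\<And>x. alpha j (W (rev ws) x) = C * alpha (Some i) x"
    using alpha_W_flipped_proportional min_rep_alpha_nonneg[OF j] by blast
  have "alpha j eta = 0"
    using alpha_self[of j eta] parabolic_fixes_eta[of "[j]"] j by (simp add: W_single)
  then show ?thesis using C[of "W ws eta"] \<open>C > 0\<close> by (simp add: W_rev_app)
qed

lemma not_min_rep_if_alpha_zero:
  assumes zero: "alpha (Some i) (W ws eta) = 0"
  shows "\<exists>j\<in>J. L (W (ws @ [Some i]) \<circ> G j) < L (W (ws @ [Some i]))"
proof -
  define t where "t = W (ws @ [Some i] @ rev ws)"
  have t_conj: "t (W (rev ws) x) = W (rev ws) (G (Some i) x)" for x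
    by (simp add: t_def W_append W_Cons W_app_rev)
  have "t eta = eta"
    using t_conj[of "W ws eta"] zero by (simp add: W_rev_app G_Some)
  then have "t \<in> parabolic cor rt Q n theta J"
    using stab unfolding stabilizer_def Waff_def t_def by blast
  then obtain zs where zs: "set zs \<subseteq> J" "W zs = t" unfolding parabolic_def by blast
  have "t \<noteq> id"
  proof
    assume "t = id"
    then have "W ws (W (rev ws) (G (Some i) x)) = W ws (W (rev ws) x)" for x using t_conj[of x] by simp
    then have "G (Some i) x = x" for x by (simp add: W_app_rev)
    then show False using alpha_self[of "Some i"] alpha_nonzero[of "Some i"] by force
  qed
  then obtain x zr where x: "x \<in> J" and zr: "set zr \<subseteq> J" and "W zs = G x \<circ> W zr"
    and nonneg: "nonneg_comb (\<lambda>y. alpha x (W zr y))"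
    using parabolic_last_descent[OF zs(1)] zs(2) by blast
  then have t: "t = G x \<circ> W zr" using zs(2) by simp
  have "nonneg_comb (\<lambda>y. alpha x (W zr (W (rev ws) y)))"
    by (rule nonneg_comb_parabolic_compose[OF zr x nonneg min_rep_alpha_nonneg])
  moreover have "W (rev (ws @ [Some i])) y = G x (W zr (W (rev ws) y))" for y
    using t_conj[of y] t by (simp add: W_Cons)
  then have "alpha x (W (rev (ws @ [Some i])) y) = - alpha x (W zr (W (rev ws) y))" for y
    by (simp add: alpha_self)
  ultimately have "nonpos_comb (\<lambda>y. alpha x (W (rev (ws @ [Some i])) y))"
    by (simp add: nonpos_comb_def)
  then show ?thesis using L_mult_left_less x by blast
qed

end

lemma dot_action_simple_reflection:
  fixes eta :: "real^'n" and J :: "'i option set" and sigma :: "real^'n \<Rightarrow> real^'n" and i :: 'i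
  assumes eta: "eta \<in> alcove_minus cor rt Q n"
    and stab: "parabolic cor rt Q n theta J = stabilizer cor rt Q n theta eta"
    and sigma: "sigma \<in> Wfin cor rt Q n theta \<inter> min_reps cor rt Q n theta J"
  defines "p \<equiv> (sigma eta + rhoc cor rt) \<bullet> rv (rt i)" and "si \<equiv> gmult sigma (G (Some i))"
  shows "(si \<in> min_reps cor rt Q n theta J \<and> bruhat_less cor rt Q n theta sigma si \<longrightarrow> - nR (cor i) < p \<and> p < 0)
       \<and> (si \<in> min_reps cor rt Q n theta J \<and> bruhat_less cor rt Q n theta si sigma \<longrightarrow> 0 < p \<and> p < nR (cor i))
       \<and> (si \<notin> min_reps cor rt Q n theta J \<longleftrightarrow> p = 0)"
proof -
  obtain ws where sigma_W: "sigma = W ws" and ws: "set ws \<subseteq> range Some"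
    using sigma unfolding Wfin_def by blast
  have min_rep: "\<And>j. j \<in> J \<Longrightarrow> L (W ws) < L (W ws \<circ> G j)"
    using sigma sigma_W unfolding min_reps_def gmult_def by blast
  have si: "si = W (ws @ [Some i])" by (simp add: si_def gmult_def sigma_W W_append W_single)
  have p: "p = alpha (Some i) (W ws eta)" by (simp add: p_def sigma_W alpha_Some)
  have min_reps_iff: "si \<in> min_reps cor rt Q n theta J \<longleftrightarrow> (\<forall>j\<in>J. L si < L (si \<circ> G j))"
    by (simp add: min_reps_def gmult_def Waff_def si)
  have claim3: "si \<notin> min_reps cor rt Q n theta J \<longleftrightarrow> p = 0"
  proof
    assume "si \<notin> min_reps cor rt Q n theta J"
    then obtain j where "j \<in> J" "\<not> L si < L (si \<circ> G j)" using min_reps_iff by blast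
    then show "p = 0" using alpha_zero_if_not_min_rep[OF stab min_rep] unfolding si p by blast
  next
    assume "p = 0"
    then obtain j where "j \<in> J" "L (si \<circ> G j) < L si"
      using not_min_rep_if_alpha_zero[OF stab min_rep] unfolding si p by blast
    then show "si \<notin> min_reps cor rt Q n theta J" using min_reps_iff by auto
  qed
  have bounds: "L sigma < L si \<Longrightarrow> - nR (cor i) < p \<and> p \<le> 0"
    "L si < L sigma \<Longrightarrow> 0 \<le> p \<and> p < nR (cor i)"
    using finite_weyl_alpha_bounds[OF ws eta, of i] unfolding si p sigma_W by blast+
  have claim1: "si \<in> min_reps cor rt Q n theta J \<and> bruhat_less cor rt Q n theta sigma si
      \<longrightarrow> - nR (cor i) < p \<and> p < 0"
    using claim3 bounds(1) bruhat_less_L[of sigma si] by force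
  have claim2: "si \<in> min_reps cor rt Q n theta J \<and> bruhat_less cor rt Q n theta si sigma
      \<longrightarrow> 0 < p \<and> p < nR (cor i)"
    using claim3 bounds(2) bruhat_less_L[of si sigma] by force
  show ?thesis using claim1 claim2 claim3 by blast
qed

end

lemma twisted_root_datum_exists:
  fixes cor rt :: "'i::finite \<Rightarrow> int^'n"
  assumes cartan: "finite_type_cartan (\<lambda>i j. ipair (cor i) (rt j))" and n: "n \<ge> 1"
    and quad: "quadratic_form Q" and inv: "W_invariant cor rt Q" and highest: "tw_highest cor rt Q n theta"
  obtains d where "twisted_root_datum cor rt Q n theta d"
proof -
  note A = cartan[unfolded finite_type_cartan_def]
  obtain d :: "'i \<Rightarrow> real" where d: "(\<forall>i. 0 < d i) \<and>
      (\<forall>i j. d i * of_int (ipair (cor i) (rt j)) = d j * of_int (ipair (cor j) (rt i))) \<and>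
      (\<forall>x. x \<noteq> (\<lambda>_. 0) \<longrightarrow> 0 < (\<Sum>i\<in>UNIV. \<Sum>j\<in>UNIV. x i * d i * of_int (ipair (cor i) (rt j)) * x j))"
    using A[THEN conjunct2, THEN conjunct2, THEN conjunct2] by (rule exE)
  have "0 < n" using n by simp
  then have "twisted_root_datum cor rt Q n theta d"
    unfolding twisted_root_datum_def
    using d A[THEN conjunct1] A[THEN conjunct2, THEN conjunct1] A[THEN conjunct2, THEN conjunct2, THEN conjunct1]
      quad inv highest
    by (intro conjI) (elim conjE; assumption)+
  then show ?thesis by (rule that)
qed

theorem mainTheorem4:
  fixes cor rt :: "'i::finite \<Rightarrow> int^'n"
    and Q :: "int^'n \<Rightarrow> int" and n :: nat and theta :: "int^'n"
    and eta :: "real^'n" and J :: "'i option set" and sigma :: "real^'n \<Rightarrow> real^'n"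
  assumes cartan: "finite_type_cartan (\<lambda>i j. ipair (cor i) (rt j))"
    and n_pos: "n \<ge> 1"
    and quad: "quadratic_form Q"
    and inv: "W_invariant cor rt Q"
    and sc: "simply_connected cor Q n"
    and highest: "tw_highest cor rt Q n theta"
    and eta: "eta \<in> alcove_minus cor rt Q n"
    and J: "J \<noteq> UNIV"
    and stab: "parabolic cor rt Q n theta J = stabilizer cor rt Q n theta eta"
    and sigma: "sigma \<in> Wfin cor rt Q n theta \<inter> min_reps cor rt Q n theta J"
  shows "\<forall>i. let mu = sigma eta;
               p = (mu + rhoc cor rt) \<bullet> rv (rt i);
               N = real (nQ Q n (cor i));
               si = gmult sigma (gen cor rt Q n theta (Some i))
           in (si \<in> min_reps cor rt Q n theta J \<and> bruhat_less cor rt Q n theta sigma si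
                  \<longrightarrow> - N < p \<and> p < 0)
            \<and> (si \<in> min_reps cor rt Q n theta J \<and> bruhat_less cor rt Q n theta si sigma
                  \<longrightarrow> 0 < p \<and> p < N)
            \<and> (si \<notin> min_reps cor rt Q n theta J \<longleftrightarrow> p = 0)"
proof -
  obtain d where "twisted_root_datum cor rt Q n theta d"
    using twisted_root_datum_exists[OF cartan n_pos quad inv highest] .
  then interpret twisted_root_datum cor rt Q n theta d .
  show ?thesis
    using dot_action_simple_reflection[OF eta stab sigma] by (simp add: Let_def nR_def)
qed

end
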